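(* Let $G=(V,E,w)$ be a strongly connected graph on $n$ nodes with symmetric weights, and let $\pi_i$, $p_{ij}$ and $\psi_{ij}$ be as defined in the context (none of which depend on $S$). Define $h(j)=\sum_{i,l\in V}\pi_i\,p_{ij}\,p_{jl}\,\psi_{il}$ for $j\in V$. Then for every $S\subseteq V$, $\operatorname{fp}'(G^S,0)=\frac1n\sum_{j\in S}h(j)$. In particular, for each $k$, any set consisting of $k$ nodes with the largest values of $h$ maximizes $\operatorname{fp}'(G^S,0)$ over all $S\subseteq V$ with $|S|=k$.
   Context: Positional Voter model. A graph $G=(V,E,w)$ has node set $V$ with $|V|=n$, edge set $E\subseteq V\times V$ and weights $w\colon E\to\mathbb{R}_{>0}$; $\operatorname{in}(u)=\{v\in V:(v,u)\in E\}$; symmetric weights means $(i,j)\in E\iff(j,i)\in E$ and $w(i,j)=w(j,i)$. A configuration is a set $X\subseteq V$ (the nodes carrying the novel trait $A$). Given a biased set $S\subseteq V$ and bias $\delta\ge 0$, define $f^S_X(v\mid u)=1+\delta$ if $v\in X$ and $u\in S$, and $1$ otherwise. The process $(\mathcal{X}_t)_{t\ge0}$: given $\mathcal{X}_t=X$, a node $u$ is chosen uniformly at random from $V$, then $v\in\operatorname{in}(u)$ is chosen with probability $\frac{f^S_X(v\mid u)\,w(v,u)}{\sum_{x\in\operatorname{in}(u)} f^S_X(x\mid u)\,w(x,u)}$, and $\mathcal{X}_{t+1}=X\cup\{u\}$ if $v\in X$, $\mathcal{X}_{t+1}=X\setminus\{u\}$ otherwise. Define $\operatorname{fp}(G^S,\delta,X)=\mathbb{P}[\exists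 t\ge0:\mathcal{X}_t=V\mid\mathcal{X}_0=X]$, $\operatorname{fp}(G^S,\delta)=\frac1n\sum_{u\in V}\operatorname{fp}(G^S,\delta,\{u\})$, and $\operatorname{fp}'(G^S,0)=\frac{d}{d\delta}\big|_{\delta=0}\operatorname{fp}(G^S,\delta)$. Write $w(i,j)=0$ if $(i,j)\notin E$ and $p_{ij}=\frac{w(i,j)}{\sum_{l\in V}w(i,l)}$. Let $\pi_i=\operatorname{fp}(G^S,0,\{i\})$ (the unbiased fixation probability from $\{i\}$, independent of $S$ since $\delta=0$), and let $(\psi_{ij})_{i,j\in V}$ be the solution of $\psi_{ii}=0$ and $\psi_{ij}=\frac{1+\sum_{l\in V}(p_{il}\psi_{lj}+p_{jl}\psi_{il})}{2}$ for $i\ne j$. *)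

theory Defs
  imports "HOL-Analysis.Analysis"
begin

definition w0 :: "('v \<times> 'v) set \<Rightarrow> ('v \<Rightarrow> 'v \<Rightarrow> real) \<Rightarrow> 'v \<Rightarrow> 'v \<Rightarrow> real" where
  "w0 E w i j = (if (i, j) \<in> E then w i j else 0)"

definition in_nbrs :: "'v set \<Rightarrow> ('v \<times> 'v) set \<Rightarrow> 'v \<Rightarrow> 'v set" where
  "in_nbrs V E u = {v \<in> V. (v, u) \<in> E}"

definition wgraph :: "'v set \<Rightarrow> ('v \<times> 'v) set \<Rightarrow> ('v \<Rightarrow> 'v \<Rightarrow> real) \<Rightarrow> bool" where
  "wgraph V E w \<longleftrightarrow> finite V \<and> V \<noteq> {} \<and> E \<subseteq> V \<times> V \<and> (\<forall>e\<in>E. w (fst e) (snd e) > 0)"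

definition strongly_connected :: "'v set \<Rightarrow> ('v \<times> 'v) set \<Rightarrow> bool" where
  "strongly_connected V E \<longleftrightarrow> (\<forall>u\<in>V. \<forall>v\<in>V. (u, v) \<in> E\<^sup>*)"

definition symmetric_weights :: "('v \<times> 'v) set \<Rightarrow> ('v \<Rightarrow> 'v \<Rightarrow> real) \<Rightarrow> bool" where
  "symmetric_weights E w \<longleftrightarrow> (\<forall>i j. (i, j) \<in> E \<longleftrightarrow> (j, i) \<in> E) \<and> (\<forall>i j. (i, j) \<in> E \<longrightarrow> w i j = w j i)"

definition fbias :: "'v set \<Rightarrow> real \<Rightarrow> 'v set \<Rightarrow> 'v \<Rightarrow> 'v \<Rightarrow> real" where
  "fbias S \<delta> X v u = (if v \<in> X \<and> u \<in> S then 1 + \<delta> else 1)"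

definition choice_prob :: "'v set \<Rightarrow> ('v \<times> 'v) set \<Rightarrow> ('v \<Rightarrow> 'v \<Rightarrow> real) \<Rightarrow> 'v set \<Rightarrow> real
    \<Rightarrow> 'v set \<Rightarrow> 'v \<Rightarrow> 'v \<Rightarrow> real" where
  "choice_prob V E w S \<delta> X u v =
     fbias S \<delta> X v u * w v u / (\<Sum>x\<in>in_nbrs V E u. fbias S \<delta> X x u * w x u)"

definition next_config :: "'v set \<Rightarrow> 'v \<Rightarrow> 'v \<Rightarrow> 'v set" where
  "next_config X u v = (if v \<in> X then insert u X else X - {u})"

text \<open>hit_prob t X = P[exists s \<le> t. X_s = V | X_0 = X], by first-step analysis.\<close>
fun hit_prob :: "'v set \<Rightarrow> ('v \<times> 'v) set \<Rightarrow> ('v \<Rightarrow> 'v \<Rightarrow> real) \<Rightarrow> 'v set \<Rightarrow> real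
    \<Rightarrow> nat \<Rightarrow> 'v set \<Rightarrow> real" where
  "hit_prob V E w S \<delta> 0 X = (if X = V then 1 else 0)"
| "hit_prob V E w S \<delta> (Suc t) X = (if X = V then 1 else
     (\<Sum>u\<in>V. \<Sum>v\<in>in_nbrs V E u. (1 / real (card V)) * choice_prob V E w S \<delta> X u v
        * hit_prob V E w S \<delta> t (next_config X u v)))"

text \<open>fp(G^S, delta, X) = P[exists t. X_t = V | X_0 = X] = lim_t P[exists s \<le> t. X_s = V].\<close>
definition fp_from :: "'v set \<Rightarrow> ('v \<times> 'v) set \<Rightarrow> ('v \<Rightarrow> 'v \<Rightarrow> real) \<Rightarrow> 'v set \<Rightarrow> real
    \<Rightarrow> 'v set \<Rightarrow> real" where
  "fp_from V E w S \<delta> X = lim (\<lambda>t. hit_prob V E w S \<delta> t X)"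

definition fp :: "'v set \<Rightarrow> ('v \<times> 'v) set \<Rightarrow> ('v \<Rightarrow> 'v \<Rightarrow> real) \<Rightarrow> 'v set \<Rightarrow> real \<Rightarrow> real" where
  "fp V E w S \<delta> = (1 / real (card V)) * (\<Sum>u\<in>V. fp_from V E w S \<delta> {u})"

definition fp_deriv0 :: "'v set \<Rightarrow> ('v \<times> 'v) set \<Rightarrow> ('v \<Rightarrow> 'v \<Rightarrow> real) \<Rightarrow> 'v set \<Rightarrow> real" where
  "fp_deriv0 V E w S = (THE D. ((\<lambda>\<delta>. fp V E w S \<delta>) has_real_derivative D) (at 0 within {0..}))"

definition pmat :: "'v set \<Rightarrow> ('v \<times> 'v) set \<Rightarrow> ('v \<Rightarrow> 'v \<Rightarrow> real) \<Rightarrow> 'v \<Rightarrow> 'v \<Rightarrow> real" where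
  "pmat V E w i j = w0 E w i j / (\<Sum>l\<in>V. w0 E w i l)"

text \<open>pi_i: unbiased fixation probability from {i} (delta = 0, so S is irrelevant).\<close>
definition piv :: "'v set \<Rightarrow> ('v \<times> 'v) set \<Rightarrow> ('v \<Rightarrow> 'v \<Rightarrow> real) \<Rightarrow> 'v \<Rightarrow> real" where
  "piv V E w i = fp_from V E w {} 0 {i}"

definition psi :: "'v set \<Rightarrow> ('v \<times> 'v) set \<Rightarrow> ('v \<Rightarrow> 'v \<Rightarrow> real) \<Rightarrow> 'v \<Rightarrow> 'v \<Rightarrow> real" where
  "psi V E w = (THE \<psi>. (\<forall>i j. (i \<notin> V \<or> j \<notin> V) \<longrightarrow> \<psi> i j = 0)
      \<and> (\<forall>i\<in>V. \<psi> i i = 0)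
      \<and> (\<forall>i\<in>V. \<forall>j\<in>V. i \<noteq> j \<longrightarrow>
           \<psi> i j = (1 + (\<Sum>l\<in>V. pmat V E w i l * \<psi> l j + pmat V E w j l * \<psi> i l)) / 2))"

definition hfun :: "'v set \<Rightarrow> ('v \<times> 'v) set \<Rightarrow> ('v \<Rightarrow> 'v \<Rightarrow> real) \<Rightarrow> 'v \<Rightarrow> real" where
  "hfun V E w j = (\<Sum>i\<in>V. \<Sum>l\<in>V. piv V E w i * pmat V E w i j * pmat V E w j l * psi V E w i l)"

end

theory Submission
  imports Defs
begin

text \<open>
  Let \<open>\<mu>\<close> be the degree-proportional distribution, with respect to which the random walk \<open>P\<close>
  is reversible. At \<open>\<delta> = 0\<close> the map \<open>X \<mapsto> \<Sum>i\<in>X. \<mu> i\<close> is harmonic for the voter process,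
  so it is the neutral fixation probability; in particular \<open>\<pi> = \<mu>\<close>.

  For the biased process we write the fixation probability from \<open>X\<close> as
  \<open>(\<Sum>i\<in>X. \<mu> i) + \<delta> * \<Phi> X + r \<delta> X\<close> with \<open>\<Phi> X = (\<Sum>a\<in>X. \<Sum>b\<in>V - X. K a b)\<close>, where
  \<open>K a b = \<mu> a * \<mu> b * J (a, b)\<close> and \<open>J\<close> solves the Poisson equation of the walk of two
  particles, one of which moves at each step, with source \<open>C a b / (2 * \<mu> a * \<mu> b)\<close> for
  \<open>C a b = (\<Sum>u\<in>S. \<mu> u * P u a * P u b)\<close>. This choice makes the remainder \<open>r \<delta>\<close> satisfy a
  Poisson equation for the biased process whose source is \<open>O(\<delta>\<^sup>2)\<close>. Every configuration
  reaches \<open>{}\<close> or \<open>V\<close> within \<open>n\<close> steps with probability bounded below uniformly in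
  \<open>\<delta> \<in> [0, 1]\<close>, so a maximum principle gives \<open>r \<delta> = O(\<delta>\<^sup>2)\<close>, and the derivative at \<open>0\<close> is
  \<open>(1 / n) * (\<Sum>u\<in>V. \<Phi> {u}) = (1 / n) * (\<Sum>a\<in>V. \<Sum>b\<in>V. K a b)\<close>.

  By detailed balance \<open>K\<close> solves the adjoint of the pair equation solved by \<open>\<psi>\<close>, with source
  \<open>C\<close> in place of \<open>1\<close>. Pairing the two equations gives
  \<open>(\<Sum>a\<in>V. \<Sum>b\<in>V. K a b) = (\<Sum>x\<in>V. \<Sum>y\<in>V. \<psi> x y * C x y) = (\<Sum>j\<in>S. h j)\<close>. Since the
  derivative is additive in \<open>S\<close>, a set of \<open>k\<close> nodes with the largest values of \<open>h\<close> maximises it.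
\<close>

lemma weighted_sum_le_single_plus_max:
  fixes c g :: "'k \<Rightarrow> real"
  assumes "finite A" "j \<in> A" "\<And>i. i \<in> A \<Longrightarrow> 0 \<le> c i" "sum c A \<le> 1"
    and "\<And>i. i \<in> A \<Longrightarrow> g i \<le> M" "0 \<le> M"
  shows "(\<Sum>i\<in>A. c i * g i) \<le> c j * g j + (1 - c j) * M"
proof -
  have "(\<Sum>i\<in>A - {j}. c i * g i) \<le> (\<Sum>i\<in>A - {j}. c i) * M"
    unfolding sum_distrib_right using assms by (intro sum_mono mult_left_mono) auto
  also have "\<dots> \<le> (1 - c j) * M"
    using assms by (intro mult_right_mono) (auto simp: sum_diff1)
  finally show ?thesis
    using assms(1,2) by (simp add: sum.remove)
qed

lemma sum_eq_const_except_two: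
  fixes F :: "'a \<Rightarrow> real" and c :: real
  assumes "finite A" "a \<in> A" "b \<in> A" "a \<noteq> b"
    and "\<And>u. u \<in> A \<Longrightarrow> u \<noteq> a \<Longrightarrow> u \<noteq> b \<Longrightarrow> F u = c"
  shows "sum F A = card A * c + (F a - c) + (F b - c)"
proof -
  have "sum F A - card A * c = (\<Sum>u\<in>A. F u - c)"
    by (simp add: sum_subtractf)
  also have "\<dots> = (\<Sum>u\<in>{a, b}. F u - c)"
    using assms by (intro sum.mono_neutral_right) auto
  also have "\<dots> = (F a - c) + (F b - c)"
    using assms(4) by simp
  finally show ?thesis by linarith
qed

lemma pair_operator_adjoint:
  fixes K F P :: "'a \<Rightarrow> 'a \<Rightarrow> real"
  shows "(\<Sum>a\<in>A. \<Sum>b\<in>A. K a b * ((\<Sum>m\<in>A. P a m * F m b) + (\<Sum>m\<in>A. P b m * F a m) - 2 * F a b))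
     = (\<Sum>x\<in>A. \<Sum>y\<in>A. F x y * ((\<Sum>a\<in>A. K a y * P a x) + (\<Sum>b\<in>A. K x b * P b y) - 2 * K x y))"
proof -
  have first: "(\<Sum>a\<in>A. \<Sum>b\<in>A. K a b * (\<Sum>m\<in>A. P a m * F m b))
      = (\<Sum>x\<in>A. \<Sum>y\<in>A. F x y * (\<Sum>a\<in>A. K a y * P a x))"
  proof -
    have "(\<Sum>a\<in>A. \<Sum>b\<in>A. K a b * (\<Sum>m\<in>A. P a m * F m b))
        = (\<Sum>a\<in>A. \<Sum>b\<in>A. \<Sum>m\<in>A. K a b * P a m * F m b)"
      by (simp add: sum_distrib_left mult.assoc)
    also have "\<dots> = (\<Sum>b\<in>A. \<Sum>a\<in>A. \<Sum>m\<in>A. K a b * P a m * F m b)"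
      by (rule sum.swap)
    also have "\<dots> = (\<Sum>b\<in>A. \<Sum>m\<in>A. \<Sum>a\<in>A. K a b * P a m * F m b)"
      by (rule sum.cong[OF refl], rule sum.swap)
    also have "\<dots> = (\<Sum>m\<in>A. \<Sum>b\<in>A. \<Sum>a\<in>A. K a b * P a m * F m b)"
      by (rule sum.swap)
    finally show ?thesis by (simp add: sum_distrib_left mult_ac)
  qed
  have second: "(\<Sum>a\<in>A. \<Sum>b\<in>A. K a b * (\<Sum>m\<in>A. P b m * F a m))
      = (\<Sum>x\<in>A. \<Sum>y\<in>A. F x y * (\<Sum>b\<in>A. K x b * P b y))"
  proof -
    have "(\<Sum>a\<in>A. \<Sum>b\<in>A. K a b * (\<Sum>m\<in>A. P b m * F a m))
        = (\<Sum>a\<in>A. \<Sum>b\<in>A. \<Sum>m\<in>A. K a b * P b m * F a m)"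
      by (simp add: sum_distrib_left mult.assoc)
    also have "\<dots> = (\<Sum>a\<in>A. \<Sum>m\<in>A. \<Sum>b\<in>A. K a b * P b m * F a m)"
      by (rule sum.cong[OF refl], rule sum.swap)
    finally show ?thesis by (simp add: sum_distrib_left mult_ac)
  qed
  have "(\<Sum>a\<in>A. \<Sum>b\<in>A. 2 * (K a b * F a b)) = (\<Sum>x\<in>A. \<Sum>y\<in>A. 2 * (F x y * K x y))"
    by (simp add: mult.commute)
  then show ?thesis
    using first second by (simp add: algebra_simps sum.distrib sum_subtractf)
qed

lemma biased_share_bounds:
  fixes a d :: real
  assumes a: "0 \<le> a" "a \<le> 1" and d: "0 \<le> d"
  shows "\<bar>(1 + d) * a / ((1 + d) * a + (1 - a)) - a - d * (a * (1 - a))\<bar> \<le> d\<^sup>2"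
    and "\<bar>(1 + d) * a / ((1 + d) * a + (1 - a)) - a\<bar> \<le> d"
proof -
  define D where "D = (1 + d) * a + (1 - a)"
  define t where "t = a * (1 - a)"
  have D: "1 \<le> D" using a d unfolding D_def by (simp add: algebra_simps)
  have t: "0 \<le> t" "t \<le> 1" "a * t \<le> 1" "0 \<le> a * t"
    using a unfolding t_def by (simp_all add: mult_le_one)
  have shrink: "x / D \<le> x" if "0 \<le> x" for x
    using D that mult_left_mono[of 1 D x] by (simp add: divide_le_eq)
  have first: "(1 + d) * a / D - a = d * t / D"
    using D unfolding D_def t_def by (simp add: field_simps)
  also have "\<dots> \<le> d"
    using shrink[of "d * t"] d t mult_left_le[of t d] by simp
  finally show "\<bar>(1 + d) * a / ((1 + d) * a + (1 - a)) - a\<bar> \<le> d"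
    using first d t D unfolding D_def[symmetric] by simp
  have "(1 + d) * a / D - a - d * t = - (d\<^sup>2 * (a * t) / D)"
    unfolding first using D unfolding D_def t_def by (simp add: field_simps power2_eq_square)
  moreover have "d\<^sup>2 * (a * t) / D \<le> d\<^sup>2"
    using shrink[of "d\<^sup>2 * (a * t)"] t mult_left_le[of "a * t" "d\<^sup>2"] by simp
  ultimately show "\<bar>(1 + d) * a / ((1 + d) * a + (1 - a)) - a - d * (a * (1 - a))\<bar> \<le> d\<^sup>2"
    using t D unfolding D_def[symmetric] t_def[symmetric] by simp
qed

lemma rtrancl_edge_leaving:
  "(x, y) \<in> R\<^sup>* \<Longrightarrow> x \<in> X \<Longrightarrow> y \<notin> X \<Longrightarrow> \<exists>v u. (v, u) \<in> R \<and> v \<in> X \<and> u \<notin> X"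
  by (induction rule: rtrancl_induct) auto

lemma has_real_derivative_at_0_if_quadratic_remainder:
  fixes f :: "real \<Rightarrow> real"
  assumes "\<And>\<delta>. 0 \<le> \<delta> \<Longrightarrow> \<delta> \<le> 1 \<Longrightarrow> \<bar>f \<delta> - f 0 - \<delta> * D\<bar> \<le> C * \<delta>\<^sup>2"
  shows "(f has_real_derivative D) (at 0 within {0..})"
proof -
  have "\<forall>\<^sub>F \<delta> in at 0 within {0..}. norm ((f \<delta> - f 0) / (\<delta> - 0) - D) \<le> C * \<delta>"
    unfolding eventually_at
  proof (intro exI[of _ 1] conjI ballI impI)
    fix \<delta> :: real assume "\<delta> \<in> {0..}" "\<delta> \<noteq> 0 \<and> dist \<delta> 0 < 1"
    then have \<delta>: "0 < \<delta>" "\<delta> \<le> 1" by (auto simp: dist_real_def)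
    have "(f \<delta> - f 0) / (\<delta> - 0) - D = (f \<delta> - f 0 - \<delta> * D) / \<delta>"
      using \<delta> by (simp add: field_simps)
    then show "norm ((f \<delta> - f 0) / (\<delta> - 0) - D) \<le> C * \<delta>"
      using assms[of \<delta>] \<delta> by (simp add: divide_le_eq power2_eq_square mult_ac)
  qed simp
  moreover have "((\<lambda>\<delta>. C * \<delta>) \<longlongrightarrow> 0) (at 0 within {0..})"
    by (intro tendsto_eq_intros) auto
  ultimately have "((\<lambda>\<delta>. (f \<delta> - f 0) / (\<delta> - 0) - D) \<longlongrightarrow> 0) (at 0 within {0..})"
    by (rule Lim_null_comparison)
  then show ?thesis
    unfolding has_field_derivative_iff by (rule LIM_zero_cancel)
qed

lemma The_has_real_derivative_at_0:
  fixes f :: "real \<Rightarrow> real"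
  assumes "(f has_real_derivative D) (at 0 within {0..})"
  shows "(THE D. (f has_real_derivative D) (at 0 within {0..})) = D"
proof (rule the_equality)
  fix D' assume "(f has_real_derivative D') (at 0 within {0..})"
  then show "D' = D"
    using assms by (rule has_field_derivative_unique) (simp add: at_within_Ici_at_right)
qed (rule assms)

lemma sum_le_sum_if_dominating:
  fixes h :: "'a \<Rightarrow> 'b :: ordered_comm_monoid_add"
  assumes "finite V" "S \<subseteq> V" "T \<subseteq> V" "card S = card T"
    and dominating: "\<forall>j\<in>T. \<forall>l\<in>V - T. h l \<le> h j"
  shows "sum h S \<le> sum h T"
proof -
  have fin: "finite S" "finite T" using assms(1-3) finite_subset by auto
  have "card S = card (S \<inter> T) + card (S - T)"
    by (rule card_Int_Diff[OF fin(1)])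
  moreover have "card T = card (S \<inter> T) + card (T - S)"
    using card_Int_Diff[OF fin(2), of S] by (simp add: inf_commute)
  ultimately have "card (S - T) = card (T - S)"
    using assms(4) by linarith
  then obtain g where g: "bij_betw g (S - T) (T - S)"
    using finite_same_card_bij[of "S - T" "T - S"] fin by auto
  have "sum h (S - T) \<le> (\<Sum>l\<in>S - T. h (g l))"
  proof (rule sum_mono)
    fix l assume "l \<in> S - T"
    then show "h l \<le> h (g l)"
      using dominating bij_betwE[OF g] assms(2) by blast
  qed
  also have "\<dots> = sum h (T - S)"
    by (rule sum.reindex_bij_betw[OF g])
  finally have "sum h (S \<inter> T) + sum h (S - T) \<le> sum h (S \<inter> T) + sum h (T - S)"
    by (rule add_left_mono)
  moreover have "sum h S = sum h (S \<inter> T) + sum h (S - T)"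
    by (rule sum.Int_Diff[OF fin(1)])
  moreover have "sum h T = sum h (S \<inter> T) + sum h (T - S)"
    using sum.Int_Diff[OF fin(2), of h S] by (simp add: inf_commute)
  ultimately show ?thesis by simp
qed

section \<open>A maximum principle for substochastic linear systems\<close>

text \<open>A system on the states \<open>St\<close> with boundary \<open>B\<close>: from \<open>x\<close>, move \<open>j \<in> I x\<close> has weight
  \<open>c x j\<close> and leads to \<open>f x j\<close>.\<close>

fun absorbed_within :: "'s set \<Rightarrow> ('s \<Rightarrow> 'k set) \<Rightarrow> ('s \<Rightarrow> 'k \<Rightarrow> real) \<Rightarrow> ('s \<Rightarrow> 'k \<Rightarrow> 's)
    \<Rightarrow> real \<Rightarrow> nat \<Rightarrow> 's \<Rightarrow> bool" where
  "absorbed_within B I c f \<eta> 0 x \<longleftrightarrow> x \<in> B"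
| "absorbed_within B I c f \<eta> (Suc k) x \<longleftrightarrow>
     x \<in> B \<or> (\<exists>j\<in>I x. \<eta> \<le> c x j \<and> absorbed_within B I c f \<eta> k (f x j))"

lemma absorbed_within_Suc:
  "absorbed_within B I c f \<eta> k x \<Longrightarrow> absorbed_within B I c f \<eta> (Suc k) x"
  by (induction k arbitrary: x) auto

lemma absorbed_within_mono:
  assumes "absorbed_within B I c f \<eta> k x" "k \<le> m"
  shows "absorbed_within B I c f \<eta> m x"
  using assms(2,1) by (induction m rule: dec_induct) (simp_all only: absorbed_within_Suc)

lemma absorbed_within_uniform:
  assumes "finite St" "\<And>x. x \<in> St \<Longrightarrow> \<exists>k. absorbed_within B I c f \<eta> k x"
  shows "\<exists>L. \<forall>x\<in>St. absorbed_within B I c f \<eta> L x"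
proof -
  obtain k where k: "\<And>x. x \<in> St \<Longrightarrow> absorbed_within B I c f \<eta> (k x) x"
    using assms(2) by metis
  have "absorbed_within B I c f \<eta> (Max (k ` St)) x" if "x \<in> St" for x
    using k[OF that] by (rule absorbed_within_mono) (simp add: assms(1) that)
  then show ?thesis by blast
qed

locale substochastic_system =
  fixes St :: "'s set" and B :: "'s set" and I :: "'s \<Rightarrow> 'k set"
    and c :: "'s \<Rightarrow> 'k \<Rightarrow> real" and f :: "'s \<Rightarrow> 'k \<Rightarrow> 's"
  assumes finite_states: "finite St"
    and finite_moves: "x \<in> St - B \<Longrightarrow> finite (I x)"
    and weight_nonneg: "x \<in> St - B \<Longrightarrow> j \<in> I x \<Longrightarrow> 0 \<le> c x j"
    and target_in_states: "x \<in> St - B \<Longrightarrow> j \<in> I x \<Longrightarrow> f x j \<in> St"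
    and weight_sum_le_1: "x \<in> St - B \<Longrightarrow> sum (c x) (I x) \<le> 1"
begin

lemma absorbed_within_bound:
  fixes r :: "'s \<Rightarrow> real"
  assumes upper: "\<And>y. y \<in> St \<Longrightarrow> r y \<le> M" "0 \<le> M"
    and boundary: "\<And>y. y \<in> B \<Longrightarrow> r y \<le> 0"
    and subharmonic: "\<And>y. y \<in> St - B \<Longrightarrow> r y \<le> (\<Sum>j\<in>I y. c y j * r (f y j)) + \<sigma>"
    and \<eta>: "0 < \<eta>" "\<eta> \<le> 1" and \<sigma>: "0 \<le> \<sigma>"
  shows "y \<in> St \<Longrightarrow> absorbed_within B I c f \<eta> k y \<Longrightarrow> r y \<le> (1 - \<eta> ^ k) * M + k * \<sigma>"
proof (induction k arbitrary: y)
  case 0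
  then show ?case using boundary by simp
next
  case (Suc k)
  have "\<eta> ^ Suc k \<le> 1" by (rule power_le_one) (use \<eta> in auto)
  then have nonneg: "0 \<le> (1 - \<eta> ^ Suc k) * M + Suc k * \<sigma>"
    using \<sigma> upper(2) by simp
  have interior: "r y \<le> (1 - \<eta> ^ Suc k) * M + Suc k * \<sigma>" if y: "y \<in> St - B"
  proof -
    obtain j where j: "j \<in> I y" "\<eta> \<le> c y j" "absorbed_within B I c f \<eta> k (f y j)"
      using Suc.prems y by auto
    have fj: "f y j \<in> St" using target_in_states[OF y j(1)] .
    have IH: "r (f y j) \<le> (1 - \<eta> ^ k) * M + k * \<sigma>" using Suc.IH[OF fj j(3)] .
    have "r y \<le> c y j * r (f y j) + (1 - c y j) * M + \<sigma>"
      using subharmonic[OF y] weighted_sum_le_single_plus_max[of "I y" j "c y" "\<lambda>i. r (f y i)" M]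
        finite_moves[OF y] j(1) weight_nonneg[OF y] weight_sum_le_1[OF y] upper target_in_states[OF y]
      by fastforce
    also have "\<dots> = M - c y j * (M - r (f y j)) + \<sigma>" by (simp add: algebra_simps)
    also have "\<dots> \<le> M - \<eta> * (M - r (f y j)) + \<sigma>"
      using j(2) upper(1)[OF fj] by (simp add: mult_right_mono)
    also have "\<dots> \<le> M - \<eta> * (\<eta> ^ k * M - k * \<sigma>) + \<sigma>"
      using IH \<eta> mult_left_mono[of "\<eta> ^ k * M - k * \<sigma>" "M - r (f y j)" \<eta>] by argo
    also have "\<dots> \<le> (1 - \<eta> ^ Suc k) * M + Suc k * \<sigma>"
      using mult_left_le_one_le[of "k * \<sigma>" \<eta>] \<eta> \<sigma> by (simp add: algebra_simps)
    finally show ?thesis .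
  qed
  show ?case
    using Suc.prems(1) boundary[of y] nonneg interior by (cases "y \<in> B") auto
qed

lemma max_principle:
  fixes r :: "'s \<Rightarrow> real"
  assumes boundary: "\<And>y. y \<in> B \<Longrightarrow> r y \<le> 0"
    and subharmonic: "\<And>y. y \<in> St - B \<Longrightarrow> r y \<le> (\<Sum>j\<in>I y. c y j * r (f y j)) + \<sigma>"
    and \<eta>: "0 < \<eta>" "\<eta> \<le> 1" and \<sigma>: "0 \<le> \<sigma>"
    and absorbed: "\<And>y. y \<in> St \<Longrightarrow> absorbed_within B I c f \<eta> L y"
    and x: "x \<in> St"
  shows "r x \<le> L * \<sigma> / \<eta> ^ L"
proof -
  define M where "M = Max (insert 0 (r ` St))"
  have upper: "\<And>y. y \<in> St \<Longrightarrow> r y \<le> M" "0 \<le> M"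
    unfolding M_def using finite_states by auto
  have "\<eta> ^ L * M \<le> L * \<sigma>"
  proof -
    have "M \<in> insert 0 (r ` St)" unfolding M_def using finite_states by (intro Max_in) auto
    then consider "M = 0" | y where "y \<in> St" "M = r y" by auto
    then show ?thesis
    proof cases
      case 2
      then have "M \<le> (1 - \<eta> ^ L) * M + L * \<sigma>"
        using absorbed_within_bound[OF upper boundary subharmonic \<eta> \<sigma>] absorbed by simp
      then show ?thesis by (simp add: algebra_simps)
    qed (use \<sigma> in simp)
  qed
  then have "M \<le> L * \<sigma> / \<eta> ^ L" using \<eta> by (simp add: field_simps)
  then show ?thesis using upper(1)[OF x] by linarith
qed

lemma max_principle_abs:
  fixes r s :: "'s \<Rightarrow> real"
  assumes boundary: "\<And>y. y \<in> B \<Longrightarrow> r y = 0"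
    and poisson: "\<And>y. y \<in> St - B \<Longrightarrow> r y = (\<Sum>j\<in>I y. c y j * r (f y j)) + s y"
    and source: "\<And>y. y \<in> St - B \<Longrightarrow> \<bar>s y\<bar> \<le> \<sigma>"
    and \<eta>: "0 < \<eta>" "\<eta> \<le> 1" and \<sigma>: "0 \<le> \<sigma>"
    and absorbed: "\<And>y. y \<in> St \<Longrightarrow> absorbed_within B I c f \<eta> L y"
    and x: "x \<in> St"
  shows "\<bar>r x\<bar> \<le> L * \<sigma> / \<eta> ^ L"
proof -
  have "r x \<le> L * \<sigma> / \<eta> ^ L"
    by (rule max_principle[OF _ _ \<eta> \<sigma> absorbed x]) (use boundary poisson source in force)+
  moreover have "- r x \<le> L * \<sigma> / \<eta> ^ L"
  proof (rule max_principle[OF _ _ \<eta> \<sigma> absorbed x])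
    show "- r y \<le> (\<Sum>j\<in>I y. c y j * - r (f y j)) + \<sigma>" if "y \<in> St - B" for y
      using poisson[OF that] source[OF that] by (simp add: sum_negf)
  qed (use boundary in simp)
  ultimately show ?thesis by linarith
qed

definition absorbing :: bool where
  "absorbing \<longleftrightarrow> (\<exists>\<eta>>0. \<eta> \<le> 1 \<and> (\<forall>x\<in>St. \<exists>k. absorbed_within B I c f \<eta> k x))"

definition solves_poisson :: "('s \<Rightarrow> real) \<Rightarrow> ('s \<Rightarrow> real) \<Rightarrow> bool" where
  "solves_poisson s R \<longleftrightarrow> (\<forall>x. x \<notin> St - B \<longrightarrow> R x = 0)
     \<and> (\<forall>x\<in>St - B. R x = (\<Sum>j\<in>I x. c x j * R (f x j)) + s x)"

lemma solves_poisson_unique: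
  assumes "absorbing" "solves_poisson s R" "solves_poisson s R'"
  shows "R = R'"
proof
  fix x
  obtain \<eta> L where \<eta>: "0 < \<eta>" "\<eta> \<le> 1" and L: "\<And>y. y \<in> St \<Longrightarrow> absorbed_within B I c f \<eta> L y"
    using assms(1) absorbed_within_uniform[OF finite_states] unfolding absorbing_def by metis
  have "\<bar>R x - R' x\<bar> \<le> L * (0::real) / \<eta> ^ L" if "x \<in> St"
  proof (rule max_principle_abs[OF _ _ _ \<eta> order.refl L that, where s = "\<lambda>_. 0"])
    show "R y - R' y = (\<Sum>j\<in>I y. c y j * (R (f y j) - R' (f y j))) + 0" if "y \<in> St - B" for y
      using assms(2,3) that unfolding solves_poisson_def by (simp add: right_diff_distrib sum_subtractf)
  qed (use assms(2,3) in \<open>auto simp: solves_poisson_def\<close>)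
  then show "R x = R' x" using assms(2,3) unfolding solves_poisson_def by (cases "x \<in> St") auto
qed

definition poisson_step :: "('s \<Rightarrow> real) \<Rightarrow> ('s \<Rightarrow> real) \<Rightarrow> 's \<Rightarrow> real" where
  "poisson_step s R x = (if x \<in> St - B then (\<Sum>j\<in>I x. c x j * R (f x j)) + s x else 0)"

lemma solves_poisson_iff_fixpoint: "solves_poisson s R \<longleftrightarrow> poisson_step s R = R"
  unfolding solves_poisson_def poisson_step_def fun_eq_iff by auto

lemma poisson_step_mono: "(\<And>y. R y \<le> R' y) \<Longrightarrow> poisson_step s R x \<le> poisson_step s R' x"
  unfolding poisson_step_def using finite_moves weight_nonneg
  by (auto intro!: sum_mono mult_left_mono)

lemma poisson_step_tendsto:
  "(\<And>y. (\<lambda>t. R t y) \<longlonglongrightarrow> R' y) \<Longrightarrow> (\<lambda>t. poisson_step s (R t) x) \<longlonglongrightarrow> poisson_step s R' x"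
  unfolding poisson_step_def by (auto intro!: tendsto_intros)

lemma poisson_iterate_mono:
  assumes "\<And>x. x \<in> St - B \<Longrightarrow> 0 \<le> s x"
  shows "(poisson_step s ^^ t) (\<lambda>_. 0) x \<le> (poisson_step s ^^ Suc t) (\<lambda>_. 0) x"
proof (induction t arbitrary: x)
  case 0
  then show ?case using assms by (simp add: poisson_step_def)
next
  case (Suc t)
  then show ?case by (simp only: funpow.simps comp_apply poisson_step_mono)
qed

lemma poisson_iterate_bounded:
  assumes source: "\<And>x. x \<in> St - B \<Longrightarrow> 0 \<le> s x" "\<And>x. x \<in> St - B \<Longrightarrow> s x \<le> \<sigma>"
    and \<eta>: "0 < \<eta>" "\<eta> \<le> 1" and \<sigma>: "0 \<le> \<sigma>"
    and absorbed: "\<And>y. y \<in> St \<Longrightarrow> absorbed_within B I c f \<eta> L y"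
  shows "(poisson_step s ^^ t) (\<lambda>_. 0) x \<le> max 0 (L * \<sigma> / \<eta> ^ L)"
proof (cases "x \<in> St - B")
  case True
  then have x: "x \<in> St" by simp
  let ?R = "(poisson_step s ^^ t) (\<lambda>_. 0)"
  have "?R x \<le> L * \<sigma> / \<eta> ^ L"
  proof (rule max_principle[OF _ _ \<eta> \<sigma> absorbed])
    show "?R y \<le> 0" if "y \<in> B" for y
      using that by (cases t) (simp_all add: poisson_step_def)
    show "?R y \<le> (\<Sum>j\<in>I y. c y j * ?R (f y j)) + \<sigma>" if "y \<in> St - B" for y
      using poisson_iterate_mono[where s = s and t = t and x = y, OF source(1)] source(2)[OF that] that
      by (simp add: poisson_step_def)
  qed (use x in auto)
  then show ?thesis by simp
next
  case False
  then show ?thesis by (cases t) (auto simp: poisson_step_def)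
qed

text \<open>Existence by monotone iteration from \<open>0\<close>, which is bounded by the maximum principle.\<close>

lemma solves_poisson_exists:
  assumes "absorbing" and source: "\<And>x. x \<in> St - B \<Longrightarrow> 0 \<le> s x"
  shows "\<exists>R. solves_poisson s R"
proof -
  obtain \<eta> L where \<eta>: "0 < \<eta>" "\<eta> \<le> 1" and L: "\<And>y. y \<in> St \<Longrightarrow> absorbed_within B I c f \<eta> L y"
    using assms(1) absorbed_within_uniform[OF finite_states] unfolding absorbing_def by metis
  define \<sigma> where "\<sigma> = Max (insert 0 (s ` (St - B)))"
  have \<sigma>: "0 \<le> \<sigma>" "\<And>x. x \<in> St - B \<Longrightarrow> s x \<le> \<sigma>"
    unfolding \<sigma>_def using finite_states by auto
  define R where "R x = (SUP t. (poisson_step s ^^ t) (\<lambda>_. 0) x)" for x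
  have lim: "(\<lambda>t. (poisson_step s ^^ t) (\<lambda>_. 0) x) \<longlonglongrightarrow> R x" for x
    unfolding R_def
  proof (rule LIMSEQ_incseq_SUP)
    show "bdd_above (range (\<lambda>t. (poisson_step s ^^ t) (\<lambda>_. 0) x))"
      using poisson_iterate_bounded[where s = s, OF source \<sigma>(2) \<eta> \<sigma>(1) L] by (intro bdd_aboveI2) blast
    show "incseq (\<lambda>t. (poisson_step s ^^ t) (\<lambda>_. 0) x)"
      using poisson_iterate_mono[where s = s, OF source] by (simp add: incseq_SucI)
  qed
  have "(\<lambda>t. (poisson_step s ^^ Suc t) (\<lambda>_. 0) x) \<longlonglongrightarrow> poisson_step s R x" for x
    unfolding funpow.simps comp_apply by (rule poisson_step_tendsto[OF lim])
  then have "poisson_step s R = R"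
    using lim LIMSEQ_Suc LIMSEQ_unique by (blast intro: ext)
  then show ?thesis
    unfolding solves_poisson_iff_fixpoint by blast
qed

end

section \<open>The random walk on the graph and the pair walk\<close>

locale voter_graph =
  fixes V :: "'v set" and E :: "('v \<times> 'v) set" and w :: "'v \<Rightarrow> 'v \<Rightarrow> real"
  assumes graph: "wgraph V E w" and connected: "strongly_connected V E"
    and symmetric: "symmetric_weights E w"
begin

lemma finite_V: "finite V" and V_nonempty: "V \<noteq> {}" and E_subset: "E \<subseteq> V \<times> V"
  and w_pos: "(i, j) \<in> E \<Longrightarrow> 0 < w i j"
  using graph unfolding wgraph_def by auto

lemma E_sym: "(i, j) \<in> E \<longleftrightarrow> (j, i) \<in> E" and w_sym: "(i, j) \<in> E \<Longrightarrow> w i j = w j i"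
  using symmetric unfolding symmetric_weights_def by auto

lemma finite_E: "finite E"
  using finite_subset[OF E_subset] finite_V by blast

abbreviation W :: "'v \<Rightarrow> 'v \<Rightarrow> real" where "W \<equiv> w0 E w"
abbreviation P :: "'v \<Rightarrow> 'v \<Rightarrow> real" where "P \<equiv> pmat V E w"

definition deg :: "'v \<Rightarrow> real" where "deg i = (\<Sum>l\<in>V. W i l)"

lemma W_nonneg: "0 \<le> W i j"
  unfolding w0_def using w_pos by (auto intro: less_imp_le)

lemma W_pos: "(i, j) \<in> E \<Longrightarrow> 0 < W i j"
  unfolding w0_def using w_pos by auto

lemma W_sym: "W i j = W j i"
  unfolding w0_def using E_sym w_sym by auto

lemma deg_nonneg: "0 \<le> deg i"
  unfolding deg_def by (intro sum_nonneg W_nonneg)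

lemma P_eq: "P i j = W i j / deg i"
  unfolding pmat_def deg_def ..

lemma P_nonneg: "0 \<le> P i j"
  unfolding P_eq using W_nonneg deg_nonneg by simp

lemma P_row_sum_le_1: "(\<Sum>l\<in>V. P i l) \<le> 1"
  unfolding P_eq by (simp add: sum_divide_distrib[symmetric] deg_def[symmetric])

lemma deg_pos_if_edge: "(i, j) \<in> E \<Longrightarrow> 0 < deg i"
proof -
  assume e: "(i, j) \<in> E"
  then have "W i j \<le> deg i" unfolding deg_def
    using E_subset finite_V W_nonneg by (intro member_le_sum) auto
  then show ?thesis using W_pos[OF e] by linarith
qed

lemma P_pos: "(i, j) \<in> E \<Longrightarrow> 0 < P i j"
  unfolding P_eq using W_pos deg_pos_if_edge by simp

text \<open>The pair walk: two walkers on \<open>V\<close>, one of which (chosen fairly) takes a \<open>P\<close>-step;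
  the diagonal \<open>Id\<close> is absorbing. A move is a pair \<open>(b, l)\<close>: \<open>b\<close> selects the walker, \<open>l\<close> its
  new position.\<close>

fun pair_weight :: "'v \<times> 'v \<Rightarrow> bool \<times> 'v \<Rightarrow> real" where
  "pair_weight (i, j) (b, l) = (if b then P i l else P j l) / 2"

fun pair_target :: "'v \<times> 'v \<Rightarrow> bool \<times> 'v \<Rightarrow> 'v \<times> 'v" where
  "pair_target (i, j) (b, l) = (if b then (l, j) else (i, l))"

lemma pair_sum:
  "(\<Sum>k\<in>UNIV \<times> V. pair_weight (i, j) k * g (pair_target (i, j) k))
     = ((\<Sum>l\<in>V. P i l * g (l, j)) + (\<Sum>l\<in>V. P j l * g (i, l))) / 2"
proof -
  have "(\<Sum>k\<in>UNIV \<times> V. F k) = (\<Sum>b\<in>UNIV. \<Sum>l\<in>V. F (b, l))" for F :: "bool \<times> 'v \<Rightarrow> real"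
    by (simp add: sum.cartesian_product)
  then show ?thesis
    by (simp add: UNIV_bool sum_divide_distrib[symmetric] add_divide_distrib add.commute)
qed

sublocale pair: substochastic_system "V \<times> V" Id "\<lambda>_. UNIV \<times> V" pair_weight pair_target
proof
  fix x assume x: "x \<in> V \<times> V - Id"
  then obtain i j where ij: "x = (i, j)" "i \<in> V" "j \<in> V" by auto
  show "sum (pair_weight x) (UNIV \<times> V) \<le> 1"
    using pair_sum[of i j "\<lambda>_. 1"] P_row_sum_le_1[of i] P_row_sum_le_1[of j] ij(1) by simp
  show "0 \<le> pair_weight x k" and "pair_target x k \<in> V \<times> V" if "k \<in> UNIV \<times> V" for k
    using that ij P_nonneg by (cases k; auto)+
qed (use finite_V in auto)

lemma pair_absorbing: "pair.absorbing"
proof -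
  define \<eta> where "\<eta> = Min (insert 1 ((\<lambda>(i, j). P i j / 2) ` E))"
  have \<eta>: "0 < \<eta>" "\<eta> \<le> 1"
    unfolding \<eta>_def using finite_E P_pos by auto
  have \<eta>_le: "\<eta> \<le> P i j / 2" if "(i, j) \<in> E" for i j
    unfolding \<eta>_def using finite_E that by (intro Min_le) force+
  have "\<exists>k. absorbed_within Id (\<lambda>_. UNIV \<times> V) pair_weight pair_target \<eta> k (i, j)"
    if "i \<in> V" "j \<in> V" for i j
  proof -
    have "(i, j) \<in> E\<^sup>*" using connected that unfolding strongly_connected_def by blast
    then show ?thesis
    proof (induction rule: converse_rtrancl_induct)
      case base
      have "absorbed_within Id (\<lambda>_. UNIV \<times> V) pair_weight pair_target \<eta> 0 (j, j)" by simp
      then show ?case ..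
    next
      case (step y z)
      then obtain k where "absorbed_within Id (\<lambda>_. UNIV \<times> V) pair_weight pair_target \<eta> k (z, j)"
        by blast
      moreover have "(True, z) \<in> UNIV \<times> V" using step(1) E_subset by auto
      ultimately have "absorbed_within Id (\<lambda>_. UNIV \<times> V) pair_weight pair_target \<eta> (Suc k) (y, j)"
        using \<eta>_le[OF step(1)] by fastforce
      then show ?case ..
    qed
  qed
  then show ?thesis unfolding pair.absorbing_def using \<eta>(1,2) by blast
qed

definition psi_system :: "('v \<Rightarrow> 'v \<Rightarrow> real) \<Rightarrow> bool" where
  "psi_system \<psi> \<longleftrightarrow> (\<forall>i j. (i \<notin> V \<or> j \<notin> V) \<longrightarrow> \<psi> i j = 0)
      \<and> (\<forall>i\<in>V. \<psi> i i = 0)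
      \<and> (\<forall>i\<in>V. \<forall>j\<in>V. i \<noteq> j \<longrightarrow>
           \<psi> i j = (1 + (\<Sum>l\<in>V. P i l * \<psi> l j + P j l * \<psi> i l)) / 2)"

lemma psi_system_iff_solves_poisson:
  "psi_system \<psi> \<longleftrightarrow> pair.solves_poisson (\<lambda>_. 1/2) (case_prod \<psi>)"
proof -
  have poisson_rhs: "(\<Sum>k\<in>UNIV \<times> V. pair_weight (i, j) k * case_prod \<psi> (pair_target (i, j) k)) + 1/2
      = (1 + (\<Sum>l\<in>V. P i l * \<psi> l j + P j l * \<psi> i l)) / 2" for i j
    by (simp add: pair_sum sum.distrib add_divide_distrib)
  show ?thesis
    unfolding psi_system_def pair.solves_poisson_def Ball_def split_paired_All poisson_rhs
    by auto
qed

lemma psi_system_psi: "psi_system (psi V E w)"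
proof -
  obtain R where R: "pair.solves_poisson (\<lambda>_. 1/2) R"
    using pair.solves_poisson_exists[OF pair_absorbing, of "\<lambda>_. 1/2"] by auto
  have "psi_system (curry R)"
    using R by (simp add: psi_system_iff_solves_poisson)
  moreover have "\<psi> = curry R" if "psi_system \<psi>" for \<psi>
    using pair.solves_poisson_unique[OF pair_absorbing _ R] that
    by (simp add: psi_system_iff_solves_poisson)
  ultimately have "psi_system (THE \<psi>. psi_system \<psi>)"
    by (rule theI)
  then show ?thesis unfolding psi_def psi_system_def .
qed

lemma psi_diag: "i \<in> V \<Longrightarrow> psi V E w i i = 0"
  using psi_system_psi unfolding psi_system_def by blast

lemma psi_equation:
  assumes "i \<in> V" "j \<in> V" "i \<noteq> j"
  shows "2 * psi V E w i j - ((\<Sum>l\<in>V. P i l * psi V E w l j) + (\<Sum>l\<in>V. P j l * psi V E w i l)) = 1"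
proof -
  have "psi V E w i j = (1 + (\<Sum>l\<in>V. P i l * psi V E w l j + P j l * psi V E w i l)) / 2"
    using psi_system_psi assms unfolding psi_system_def by blast
  then show ?thesis by (simp add: sum.distrib)
qed

section \<open>One step of the biased voter process\<close>

abbreviation n :: real where "n \<equiv> real (card V)"

lemma n_pos: "0 < n"
  using finite_V V_nonempty by (simp add: card_gt_0_iff)

definition expect_next :: "'v set \<Rightarrow> real \<Rightarrow> 'v set \<Rightarrow> ('v set \<Rightarrow> real) \<Rightarrow> real" where
  "expect_next S \<delta> X g =
     (\<Sum>u\<in>V. \<Sum>v\<in>in_nbrs V E u. (1 / n) * choice_prob V E w S \<delta> X u v * g (next_config X u v))"

lemma finite_in_nbrs: "finite (in_nbrs V E u)"
  unfolding in_nbrs_def using finite_V by simp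

lemma choice_prob_nonneg: "0 \<le> \<delta> \<Longrightarrow> v \<in> in_nbrs V E u \<Longrightarrow> 0 \<le> choice_prob V E w S \<delta> X u v"
  unfolding choice_prob_def fbias_def in_nbrs_def
  by (intro divide_nonneg_nonneg mult_nonneg_nonneg sum_nonneg) (auto intro: less_imp_le w_pos)

lemma choice_prob_sum_le_1: "(\<Sum>v\<in>in_nbrs V E u. choice_prob V E w S \<delta> X u v) \<le> 1"
  unfolding choice_prob_def by (simp add: sum_divide_distrib[symmetric] divide_le_eq_1)

lemma expect_next_mono: "0 \<le> \<delta> \<Longrightarrow> (\<And>Y. g Y \<le> h Y) \<Longrightarrow> expect_next S \<delta> X g \<le> expect_next S \<delta> X h"
  unfolding expect_next_def using n_pos
  by (intro sum_mono mult_left_mono mult_nonneg_nonneg choice_prob_nonneg) auto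

lemma expect_next_const: "expect_next S \<delta> X (\<lambda>_. a) = (1 / n) * (\<Sum>u\<in>V. \<Sum>v\<in>in_nbrs V E u. choice_prob V E w S \<delta> X u v) * a"
  unfolding expect_next_def by (simp add: sum_distrib_left sum_distrib_right)

lemma expect_next_bounds:
  assumes "0 \<le> \<delta>" "\<And>Y. 0 \<le> g Y" "\<And>Y. g Y \<le> 1"
  shows "0 \<le> expect_next S \<delta> X g" "expect_next S \<delta> X g \<le> 1"
proof -
  have "expect_next S \<delta> X (\<lambda>_. 0) \<le> expect_next S \<delta> X g"
    by (rule expect_next_mono) (use assms in auto)
  then show "0 \<le> expect_next S \<delta> X g" by (simp add: expect_next_const)
  have "expect_next S \<delta> X g \<le> expect_next S \<delta> X (\<lambda>_. 1)"
    by (rule expect_next_mono) (use assms in auto)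
  also have "\<dots> = (1 / n) * (\<Sum>u\<in>V. \<Sum>v\<in>in_nbrs V E u. choice_prob V E w S \<delta> X u v)"
    by (simp add: expect_next_const)
  also have "\<dots> \<le> (1 / n) * (\<Sum>u\<in>V. 1)"
    using n_pos by (intro mult_left_mono sum_mono choice_prob_sum_le_1) auto
  also have "\<dots> = 1" using n_pos by simp
  finally show "expect_next S \<delta> X g \<le> 1" .
qed

lemma expect_next_diff: "expect_next S \<delta> X (\<lambda>Y. g Y - h Y) = expect_next S \<delta> X g - expect_next S \<delta> X h"
  unfolding expect_next_def by (simp add: right_diff_distrib sum_subtractf)

lemma expect_next_scale: "expect_next S \<delta> X (\<lambda>Y. a * g Y) = a * expect_next S \<delta> X g"
  unfolding expect_next_def by (simp add: sum_distrib_left mult_ac)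

lemma expect_next_sum: "expect_next S \<delta> X (\<lambda>Y. \<Sum>i\<in>A. g i Y) = (\<Sum>i\<in>A. expect_next S \<delta> X (g i))"
  unfolding expect_next_def sum_distrib_left
  by (simp add: sum.swap[where A = A])

lemma hit_prob_Suc_eq:
  "hit_prob V E w S \<delta> (Suc t) X = (if X = V then 1 else expect_next S \<delta> X (hit_prob V E w S \<delta> t))"
  unfolding expect_next_def by simp

lemma hit_prob_bounds: "0 \<le> \<delta> \<Longrightarrow> 0 \<le> hit_prob V E w S \<delta> t X \<and> hit_prob V E w S \<delta> t X \<le> 1"
  by (induction t arbitrary: X)
    (simp_all del: hit_prob.simps(2) add: hit_prob_Suc_eq expect_next_bounds)

lemma hit_prob_mono: "0 \<le> \<delta> \<Longrightarrow> hit_prob V E w S \<delta> t X \<le> hit_prob V E w S \<delta> (Suc t) X"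
proof (induction t arbitrary: X)
  case 0
  then show ?case
    using hit_prob_bounds expect_next_bounds
    by (simp del: hit_prob.simps(2) add: hit_prob_Suc_eq)
next
  case (Suc t)
  then show ?case
    by (simp del: hit_prob.simps add: hit_prob_Suc_eq[of _ _ "Suc t"] hit_prob_Suc_eq[of _ _ t]
        expect_next_mono)
qed

lemma fp_from_LIMSEQ:
  assumes "0 \<le> \<delta>"
  shows "(\<lambda>t. hit_prob V E w S \<delta> t X) \<longlonglongrightarrow> fp_from V E w S \<delta> X"
proof -
  have "incseq (\<lambda>t. hit_prob V E w S \<delta> t X)"
    using hit_prob_mono[OF assms] by (simp add: incseq_SucI)
  moreover have "bdd_above (range (\<lambda>t. hit_prob V E w S \<delta> t X))"
    using hit_prob_bounds[OF assms] by (intro bdd_aboveI2[where M = 1]) auto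
  ultimately have "convergent (\<lambda>t. hit_prob V E w S \<delta> t X)"
    using LIMSEQ_incseq_SUP convergent_def by blast
  then show ?thesis unfolding fp_from_def by (simp add: convergent_LIMSEQ_iff)
qed

lemma fp_from_V: "0 \<le> \<delta> \<Longrightarrow> fp_from V E w S \<delta> V = 1"
proof -
  have "hit_prob V E w S \<delta> t V = 1" for t by (cases t) simp_all
  then show "0 \<le> \<delta> \<Longrightarrow> ?thesis"
    using fp_from_LIMSEQ[of \<delta> S V] LIMSEQ_unique by (simp add: LIMSEQ_const_iff)
qed

lemma fp_from_empty: "0 \<le> \<delta> \<Longrightarrow> fp_from V E w S \<delta> {} = 0"
proof -
  have "hit_prob V E w S \<delta> t {} = 0" for t
    using V_nonempty by (induction t) (simp_all add: next_config_def)
  then show "0 \<le> \<delta> \<Longrightarrow> ?thesis"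
    using fp_from_LIMSEQ[of \<delta> S "{}"] LIMSEQ_unique by (simp add: LIMSEQ_const_iff)
qed

lemma fp_from_step:
  assumes "0 \<le> \<delta>" "X \<noteq> V"
  shows "fp_from V E w S \<delta> X = expect_next S \<delta> X (fp_from V E w S \<delta>)"
proof -
  have "(\<lambda>t. hit_prob V E w S \<delta> (Suc t) X) \<longlonglongrightarrow> expect_next S \<delta> X (fp_from V E w S \<delta>)"
    unfolding hit_prob_Suc_eq if_not_P[OF assms(2)] expect_next_def
    by (intro tendsto_intros fp_from_LIMSEQ assms(1))
  then show ?thesis
    using fp_from_LIMSEQ[OF assms(1)] LIMSEQ_Suc LIMSEQ_unique by blast
qed

end

section \<open>Stationary distribution and neutral fixation\<close>

locale nontrivial_voter_graph = voter_graph V E w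
  for V :: "'v set" and E :: "('v \<times> 'v) set" and w :: "'v \<Rightarrow> 'v \<Rightarrow> real" +
  assumes two_nodes: "\<exists>a\<in>V. \<exists>b\<in>V. a \<noteq> b"
begin

lemma exists_in_edge: "u \<in> V \<Longrightarrow> \<exists>v. (v, u) \<in> E"
proof -
  assume u: "u \<in> V"
  obtain x where x: "x \<in> V" "x \<noteq> u" using two_nodes by metis
  have "(x, u) \<in> E\<^sup>*" using connected x u unfolding strongly_connected_def by auto
  then show ?thesis using x(2) by (cases rule: rtranclE) auto
qed

lemma deg_pos: "u \<in> V \<Longrightarrow> 0 < deg u"
  using exists_in_edge E_sym deg_pos_if_edge by blast

lemma P_row_sum: "u \<in> V \<Longrightarrow> (\<Sum>l\<in>V. P u l) = 1"
  using deg_pos[of u] unfolding P_eq by (simp add: sum_divide_distrib[symmetric] deg_def[symmetric])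

lemma W_eq_deg_P: "u \<in> V \<Longrightarrow> W u l = deg u * P u l"
  using deg_pos[of u] unfolding P_eq by simp

definition mu :: "'v \<Rightarrow> real" where "mu i = deg i / (\<Sum>j\<in>V. deg j)"

lemma deg_total_pos: "0 < (\<Sum>j\<in>V. deg j)"
  using finite_V V_nonempty deg_pos by (intro sum_pos) auto

lemma mu_pos: "i \<in> V \<Longrightarrow> 0 < mu i"
  unfolding mu_def using deg_pos deg_total_pos by simp

lemma mu_nonneg: "0 \<le> mu i"
  unfolding mu_def using deg_nonneg deg_total_pos by simp

lemma mu_sum: "sum mu V = 1"
  unfolding mu_def using deg_total_pos by (simp add: sum_divide_distrib[symmetric])

lemma mu_le_1: "mu i \<le> 1"
proof (cases "i \<in> V")
  case True
  then have "mu i \<le> sum mu V" using finite_V mu_nonneg by (intro member_le_sum) auto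
  then show ?thesis using mu_sum by simp
next
  case False
  then have "deg i = 0" unfolding deg_def w0_def using E_subset by (intro sum.neutral) auto
  then show ?thesis unfolding mu_def by simp
qed

lemma mu_P_eq: "i \<in> V \<Longrightarrow> mu i * P i j = W i j / (\<Sum>k\<in>V. deg k)"
  unfolding mu_def P_eq using deg_pos[of i] by simp

lemma mu_detailed_balance: "i \<in> V \<Longrightarrow> j \<in> V \<Longrightarrow> mu i * P i j = mu j * P j i"
  using mu_P_eq W_sym by simp

lemma mu_stationary:
  assumes "l \<in> V"
  shows "(\<Sum>u\<in>V. mu u * P u l) = mu l"
proof -
  have "(\<Sum>u\<in>V. mu u * P u l) = mu l * (\<Sum>u\<in>V. P l u)"
    unfolding sum_distrib_left using assms by (intro sum.cong refl) (simp add: mu_detailed_balance)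
  then show ?thesis using P_row_sum[OF assms] by simp
qed

lemma sum_in_nbrs: "(\<Sum>v\<in>in_nbrs V E u. g v * w v u) = (\<Sum>l\<in>V. g l * W u l)"
proof -
  have "(\<Sum>l\<in>V. g l * W u l) = (\<Sum>l\<in>V. if (l, u) \<in> E then g l * w l u else 0)"
    by (intro sum.cong refl) (auto simp: w0_def E_sym[of u] w_sym)
  then show ?thesis
    unfolding in_nbrs_def using finite_V by (simp add: sum.inter_filter)
qed

definition nbr_share :: "'v set \<Rightarrow> 'v \<Rightarrow> real" where "nbr_share X u = (\<Sum>l\<in>X. P u l)"

lemma nbr_share_nonneg: "0 \<le> nbr_share X u"
  unfolding nbr_share_def by (intro sum_nonneg P_nonneg)

lemma nbr_share_le_1: "X \<subseteq> V \<Longrightarrow> nbr_share X u \<le> 1"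
  unfolding nbr_share_def
  using sum_mono2[OF finite_V, of X "P u"] P_nonneg P_row_sum_le_1[of u] by fastforce

lemma nbr_share_compl: "X \<subseteq> V \<Longrightarrow> u \<in> V \<Longrightarrow> (\<Sum>l\<in>V - X. P u l) = 1 - nbr_share X u"
  unfolding nbr_share_def using P_row_sum[of u] finite_V by (simp add: sum_diff finite_subset)

lemma sum_W_split:
  assumes "X \<subseteq> V" "u \<in> V"
  shows "(\<Sum>l\<in>V. (if l \<in> X then a else b) * W u l)
    = deg u * (a * nbr_share X u + b * (1 - nbr_share X u))"
proof -
  have "(\<Sum>l\<in>V. (if l \<in> X then a else b) * W u l) = a * (\<Sum>l\<in>X. W u l) + b * (\<Sum>l\<in>V - X. W u l)"
    using assms(1) finite_V
    by (simp add: if_distrib[of "\<lambda>x. x * _"] sum.If_cases Int_absorb1 Diff_eq sum_distrib_left)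
  then show ?thesis
    using nbr_share_compl[OF assms] W_eq_deg_P[OF assms(2)]
    by (simp add: nbr_share_def sum_distrib_left[symmetric] algebra_simps)
qed

definition adopt_prob :: "'v set \<Rightarrow> real \<Rightarrow> 'v set \<Rightarrow> 'v \<Rightarrow> real" where
  "adopt_prob S \<delta> X u = (if u \<in> S then
     (1 + \<delta>) * nbr_share X u / ((1 + \<delta>) * nbr_share X u + (1 - nbr_share X u)) else nbr_share X u)"

lemma adopt_prob_neutral: "adopt_prob S 0 X u = nbr_share X u"
  unfolding adopt_prob_def by simp

lemma sum_choice_prob:
  assumes "X \<subseteq> V" "u \<in> V" "0 \<le> \<delta>"
  shows "(\<Sum>v\<in>in_nbrs V E u. choice_prob V E w S \<delta> X u v * g (next_config X u v))
     = adopt_prob S \<delta> X u * g (insert u X) + (1 - adopt_prob S \<delta> X u) * g (X - {u})"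
proof -
  define r where "r = (if u \<in> S then 1 + \<delta> else 1)"
  define a where "a = nbr_share X u"
  have fbias: "fbias S \<delta> X v u = (if v \<in> X then r else 1)" for v
    unfolding fbias_def r_def by auto
  have den: "(\<Sum>x\<in>in_nbrs V E u. fbias S \<delta> X x u * w x u) = deg u * (r * a + (1 - a))"
    unfolding fbias sum_in_nbrs a_def using sum_W_split[OF assms(1,2), of r 1] by simp
  have num: "(\<Sum>v\<in>in_nbrs V E u. fbias S \<delta> X v u * w v u * g (next_config X u v))
      = deg u * (r * g (insert u X) * a + g (X - {u}) * (1 - a))"
    using sum_in_nbrs[of "\<lambda>v. fbias S \<delta> X v u * g (next_config X u v)" u]
      sum_W_split[OF assms(1,2), of "r * g (insert u X)" "g (X - {u})"]
    by (simp add: fbias next_config_def a_def if_distrib[of "\<lambda>x. x * _"] mult_ac cong: if_cong)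
  define D where "D = r * a + (1 - a)"
  have "1 \<le> D"
    using assms nbr_share_nonneg[of X u] unfolding D_def r_def a_def by (auto simp: distrib_right)
  then have "D \<noteq> 0" by simp
  have "(\<Sum>v\<in>in_nbrs V E u. choice_prob V E w S \<delta> X u v * g (next_config X u v))
      = (\<Sum>v\<in>in_nbrs V E u. fbias S \<delta> X v u * w v u * g (next_config X u v))
        / (\<Sum>x\<in>in_nbrs V E u. fbias S \<delta> X x u * w x u)"
    by (simp add: choice_prob_def sum_divide_distrib)
  also have "\<dots> = deg u * (r * g (insert u X) * a + g (X - {u}) * (1 - a)) / (deg u * D)"
    unfolding num den D_def ..
  also have "\<dots> = r * a / D * g (insert u X) + (1 - a) / D * g (X - {u})"
    using \<open>D \<noteq> 0\<close> deg_pos[OF assms(2)] by (simp add: field_simps)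
  also have "(1 - a) / D = 1 - r * a / D"
    using \<open>D \<noteq> 0\<close> by (simp add: field_simps D_def)
  also have "r * a / D = adopt_prob S \<delta> X u"
    unfolding adopt_prob_def D_def r_def a_def by simp
  finally show ?thesis .
qed

lemma expect_next_eq:
  assumes "X \<subseteq> V" "0 \<le> \<delta>"
  shows "expect_next S \<delta> X g = (1 / n) *
    (\<Sum>u\<in>V. adopt_prob S \<delta> X u * g (insert u X) + (1 - adopt_prob S \<delta> X u) * g (X - {u}))"
  unfolding expect_next_def sum_distrib_left
  by (intro sum.cong refl) (simp add: sum_choice_prob[OF assms(1) _ assms(2), symmetric]
      sum_distrib_left mult.assoc)

lemma adopt_prob_expansion:
  assumes "X \<subseteq> V" "0 \<le> \<delta>"
  shows "\<bar>adopt_prob S \<delta> X u - nbr_share X u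
      - \<delta> * of_bool (u \<in> S) * (nbr_share X u * (1 - nbr_share X u))\<bar> \<le> \<delta>\<^sup>2"
    and "\<bar>adopt_prob S \<delta> X u - nbr_share X u\<bar> \<le> \<delta>"
  using biased_share_bounds[OF nbr_share_nonneg nbr_share_le_1[OF assms(1)] assms(2), of u]
    assms(2) by (auto simp: adopt_prob_def)

definition config_weight :: "'v set \<Rightarrow> real \<Rightarrow> 'v set \<Rightarrow> 'v \<times> 'v \<Rightarrow> real" where
  "config_weight S \<delta> X = (\<lambda>(u, v). (1 / n) * choice_prob V E w S \<delta> X u v)"

definition config_target :: "'v set \<Rightarrow> 'v \<times> 'v \<Rightarrow> 'v set" where
  "config_target X = (\<lambda>(u, v). next_config X u v)"

lemma expect_next_eq_config_sum:
  "expect_next S \<delta> X g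
     = (\<Sum>k\<in>Sigma V (in_nbrs V E). config_weight S \<delta> X k * g (config_target X k))"
  unfolding expect_next_def config_weight_def config_target_def
  using finite_V finite_in_nbrs by (auto simp: sum.Sigma intro!: sum.cong)

lemma config_substochastic:
  assumes "0 \<le> \<delta>"
  shows "substochastic_system (Pow V) {{}, V} (\<lambda>_. Sigma V (in_nbrs V E)) (config_weight S \<delta>) config_target"
proof
  fix X assume "X \<in> Pow V - {{}, V}"
  then show "finite (Sigma V (in_nbrs V E))" using finite_V finite_in_nbrs by auto
  show "0 \<le> config_weight S \<delta> X k" and "config_target X k \<in> Pow V"
    if "k \<in> Sigma V (in_nbrs V E)" for k
    using that \<open>X \<in> Pow V - {{}, V}\<close> choice_prob_nonneg[OF assms] n_pos
    by (auto simp: config_weight_def config_target_def next_config_def split: if_split_asm)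
  show "sum (config_weight S \<delta> X) (Sigma V (in_nbrs V E)) \<le> 1"
    using expect_next_bounds(2)[OF assms, of "\<lambda>_. 1" S X]
    by (simp add: expect_next_eq_config_sum)
qed (use finite_V in simp)

definition eta_config :: real where
  "eta_config = Min (insert 1 ((\<lambda>(v, u). w v u / (2 * n * deg u)) ` E))"

lemma eta_config_pos: "0 < eta_config" and eta_config_le_1: "eta_config \<le> 1"
  unfolding eta_config_def using finite_E E_subset w_pos deg_pos n_pos
  by (auto simp: subset_eq)

lemma eta_config_le: "(v, u) \<in> E \<Longrightarrow> eta_config \<le> w v u / (2 * n * deg u)"
  unfolding eta_config_def using finite_E by (intro Min_le) force+

text \<open>Since \<open>\<delta> \<le> 1\<close>, the bias at most doubles the denominator of \<^const>\<open>choice_prob\<close>.\<close>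

lemma choice_prob_lower:
  assumes "0 \<le> \<delta>" "\<delta> \<le> 1" "(v, u) \<in> E" "v \<in> X"
  shows "w v u / (2 * deg u) \<le> choice_prob V E w S \<delta> X u v"
proof -
  define D where "D = (\<Sum>x\<in>in_nbrs V E u. fbias S \<delta> X x u * w x u)"
  have v: "v \<in> in_nbrs V E u" using assms(3) E_subset unfolding in_nbrs_def by auto
  have w: "0 < w v u" using w_pos[OF assms(3)] .
  have fbias: "1 \<le> fbias S \<delta> X v u" unfolding fbias_def using assms(1) by simp
  have "D \<le> (\<Sum>x\<in>in_nbrs V E u. 2 * w x u)"
    unfolding D_def fbias_def in_nbrs_def using assms(1,2)
    by (intro sum_mono mult_right_mono) (auto intro: less_imp_le w_pos)
  also have "\<dots> = 2 * deg u"
    using sum_in_nbrs[of "\<lambda>_. 2" u] by (simp add: deg_def sum_distrib_left)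
  finally have "D \<le> 2 * deg u" .
  moreover have "w v u \<le> D"
  proof -
    have "0 \<le> fbias S \<delta> X x u * w x u" if "x \<in> in_nbrs V E u" for x
      using that assms(1) unfolding fbias_def in_nbrs_def
      by (auto intro!: mult_nonneg_nonneg less_imp_le[OF w_pos])
    then have "fbias S \<delta> X v u * w v u \<le> D"
      unfolding D_def using finite_in_nbrs v by (intro member_le_sum) auto
    moreover have "w v u \<le> fbias S \<delta> X v u * w v u" using fbias w by simp
    ultimately show ?thesis by linarith
  qed
  ultimately have "w v u / (2 * deg u) \<le> w v u / D"
    using w by (intro divide_left_mono) auto
  also have "\<dots> \<le> fbias S \<delta> X v u * w v u / D"
    using fbias w \<open>w v u \<le> D\<close> by (intro divide_right_mono) auto
  finally show ?thesis unfolding choice_prob_def D_def .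
qed

lemma config_growth_move:
  assumes "0 \<le> \<delta>" "\<delta> \<le> 1" "X \<subseteq> V" "X \<noteq> {}" "X \<noteq> V"
  obtains u v where "(u, v) \<in> Sigma V (in_nbrs V E)" "u \<in> V - X"
    "eta_config \<le> config_weight S \<delta> X (u, v)" "config_target X (u, v) = insert u X"
proof -
  obtain x y where "x \<in> X" "y \<in> V - X" using assms(3-5) by blast
  moreover have "(x, y) \<in> E\<^sup>*"
    using connected assms(3) \<open>x \<in> X\<close> \<open>y \<in> V - X\<close> unfolding strongly_connected_def by blast
  ultimately obtain v u where vu: "(v, u) \<in> E" "v \<in> X" "u \<notin> X"
    using rtrancl_edge_leaving[of x y E X] by blast
  have "eta_config \<le> (1 / n) * (w v u / (2 * deg u))"
    using eta_config_le[OF vu(1)] by simp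
  also have "\<dots> \<le> (1 / n) * choice_prob V E w S \<delta> X u v"
    using n_pos choice_prob_lower[OF assms(1,2) vu(1,2)] by (intro mult_left_mono) auto
  also have "\<dots> = config_weight S \<delta> X (u, v)"
    by (simp add: config_weight_def)
  finally show ?thesis
    using that vu E_subset by (auto simp: in_nbrs_def config_target_def next_config_def)
qed

lemma config_absorbed_within:
  assumes "0 \<le> \<delta>" "\<delta> \<le> 1" "X \<subseteq> V"
  shows "absorbed_within {{}, V} (\<lambda>_. Sigma V (in_nbrs V E)) (config_weight S \<delta>) config_target
    eta_config (card V) X"
proof -
  let ?absorbed = "absorbed_within {{}, V} (\<lambda>_. Sigma V (in_nbrs V E)) (config_weight S \<delta>)
    config_target eta_config"
  have "?absorbed (card (V - X)) X"
    using assms(3)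
  proof (induction "card (V - X)" arbitrary: X)
    case 0
    then have "X = V" using finite_V by auto
    then show ?case by simp
  next
    case (Suc m)
    show ?case
    proof (cases "X = {}")
      case False
      moreover have "X \<noteq> V" using Suc.hyps(2) by auto
      ultimately obtain u v where uv: "(u, v) \<in> Sigma V (in_nbrs V E)" "u \<in> V - X"
        "eta_config \<le> config_weight S \<delta> X (u, v)" "config_target X (u, v) = insert u X"
        using config_growth_move[OF assms(1,2) Suc.prems] by blast
      have "V - insert u X = (V - X) - {u}" by auto
      then have "m = card (V - insert u X)"
        using Suc.hyps(2) uv(2) finite_V by (simp add: card_Diff_singleton)
      then have "?absorbed m (insert u X)"
        using Suc.hyps(1) Suc.prems uv(2) by blast
      then have "\<exists>k\<in>Sigma V (in_nbrs V E). eta_config \<le> config_weight S \<delta> X k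
          \<and> ?absorbed m (config_target X k)"
        using uv by (intro bexI[where x = "(u, v)"]) simp_all
      then show ?thesis
        unfolding Suc.hyps(2)[symmetric] by simp
    next
      case True
      then have "card (V - X) = Suc m" using Suc.hyps(2) by simp
      with True show ?thesis by (simp only: absorbed_within.simps) simp
    qed
  qed
  then show ?thesis
    by (rule absorbed_within_mono) (simp add: card_mono finite_V)
qed

text \<open>The constant does not depend on \<open>\<delta> \<in> [0, 1]\<close>; this is what turns an \<open>O(\<delta>\<^sup>2)\<close>
  source into an \<open>O(\<delta>\<^sup>2)\<close> solution below.\<close>

lemma config_max_principle:
  fixes r s :: "'v set \<Rightarrow> real"
  assumes \<delta>: "0 \<le> \<delta>" "\<delta> \<le> 1"
    and boundary: "r {} = 0" "r V = 0"
    and poisson: "\<And>X. X \<subseteq> V \<Longrightarrow> X \<noteq> {} \<Longrightarrow> X \<noteq> V \<Longrightarrow> r X = expect_next S \<delta> X r + s X"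
    and source: "\<And>X. X \<subseteq> V \<Longrightarrow> X \<noteq> {} \<Longrightarrow> X \<noteq> V \<Longrightarrow> \<bar>s X\<bar> \<le> \<sigma>"
    and "0 \<le> \<sigma>" "X \<subseteq> V"
  shows "\<bar>r X\<bar> \<le> n * \<sigma> / eta_config ^ card V"
proof -
  interpret config: substochastic_system "Pow V" "{{}, V}" "\<lambda>_. Sigma V (in_nbrs V E)"
    "config_weight S \<delta>" config_target
    by (rule config_substochastic[OF \<delta>(1)])
  have absorbed: "absorbed_within {{}, V} (\<lambda>_. Sigma V (in_nbrs V E)) (config_weight S \<delta>)
    config_target eta_config (card V) Y" if "Y \<in> Pow V" for Y
    using config_absorbed_within[OF \<delta>] that by blast
  show ?thesis
  proof (rule config.max_principle_abs[OF _ _ _ eta_config_pos eta_config_le_1 \<open>0 \<le> \<sigma>\<close> absorbed])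
    show "r Y = 0" if "Y \<in> {{}, V}" for Y
      using that boundary by blast
    show "r Y = (\<Sum>k\<in>Sigma V (in_nbrs V E). config_weight S \<delta> Y k * r (config_target Y k)) + s Y"
      if "Y \<in> Pow V - {{}, V}" for Y
      using that poisson by (simp add: expect_next_eq_config_sum)
    show "\<bar>s Y\<bar> \<le> \<sigma>" if "Y \<in> Pow V - {{}, V}" for Y
      using that source by simp
  qed (use assms(8) in auto)
qed

lemma sum_mu_nbr_share:
  assumes "X \<subseteq> V"
  shows "(\<Sum>u\<in>V. mu u * nbr_share X u) = sum mu X"
proof -
  have "(\<Sum>u\<in>V. mu u * nbr_share X u) = (\<Sum>l\<in>X. \<Sum>u\<in>V. mu u * P u l)"
    unfolding nbr_share_def sum_distrib_left by (rule sum.swap)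
  also have "\<dots> = sum mu X"
    using assms by (intro sum.cong refl mu_stationary) auto
  finally show ?thesis .
qed

lemma expect_next_sum_mu:
  assumes "X \<subseteq> V" "0 \<le> \<delta>"
  shows "expect_next S \<delta> X (sum mu)
    = sum mu X + (1 / n) * (\<Sum>u\<in>V. mu u * (adopt_prob S \<delta> X u - nbr_share X u))"
proof -
  have finite_X: "finite X" using assms(1) finite_V finite_subset by blast
  have step: "adopt_prob S \<delta> X u * sum mu (insert u X) + (1 - adopt_prob S \<delta> X u) * sum mu (X - {u})
      = sum mu X + mu u * (adopt_prob S \<delta> X u - of_bool (u \<in> X))" for u
  proof (cases "u \<in> X")
    case True
    have "sum mu X = mu u + sum mu (X - {u})" using finite_X True by (simp add: sum.remove)
    then show ?thesis using True by (simp add: insert_absorb algebra_simps)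
  next
    case False
    have "sum mu (insert u X) = mu u + sum mu X" using finite_X False by simp
    then show ?thesis using False by (simp add: algebra_simps)
  qed
  have indicator: "(\<Sum>u\<in>V. mu u * of_bool (u \<in> X)) = sum mu X"
    using assms(1) by (simp add: sum_mult_of_bool_eq[OF finite_V] Int_absorb1)
  have "expect_next S \<delta> X (sum mu)
      = (1 / n) * (\<Sum>u\<in>V. sum mu X + mu u * (adopt_prob S \<delta> X u - of_bool (u \<in> X)))"
    unfolding expect_next_eq[OF assms] step ..
  also have "(\<Sum>u\<in>V. sum mu X + mu u * (adopt_prob S \<delta> X u - of_bool (u \<in> X)))
      = n * sum mu X + (\<Sum>u\<in>V. mu u * (adopt_prob S \<delta> X u - nbr_share X u))"
    by (simp add: sum.distrib right_diff_distrib sum_subtractf indicator sum_mu_nbr_share[OF assms(1)])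
  finally show ?thesis
    using n_pos by (simp add: distrib_left)
qed

lemma fp_from_neutral:
  assumes "X \<subseteq> V"
  shows "fp_from V E w S 0 X = sum mu X"
proof -
  have "\<bar>fp_from V E w S 0 X - sum mu X\<bar> \<le> n * 0 / eta_config ^ card V"
  proof (rule config_max_principle[where s = "\<lambda>_. 0"])
    fix Y assume Y: "Y \<subseteq> V" "Y \<noteq> {}" "Y \<noteq> V"
    show "fp_from V E w S 0 Y - sum mu Y
      = expect_next S 0 Y (\<lambda>Y. fp_from V E w S 0 Y - sum mu Y) + 0"
      using fp_from_step[of 0 Y S] expect_next_sum_mu[of Y 0 S] Y
      by (simp add: expect_next_diff adopt_prob_neutral)
  qed (simp_all add: assms fp_from_V fp_from_empty mu_sum)
  then show ?thesis by simp
qed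

lemma piv_eq_mu: "i \<in> V \<Longrightarrow> piv V E w i = mu i"
  using fp_from_neutral[of "{i}" "{}"] by (simp add: piv_def)

section \<open>First-order expansion in the bias\<close>

definition bias_kernel :: "'v set \<Rightarrow> 'v \<Rightarrow> 'v \<Rightarrow> real" where
  "bias_kernel S x y = (\<Sum>u\<in>S. mu u * P u x * P u y)"

definition bias_source :: "'v set \<Rightarrow> 'v \<times> 'v \<Rightarrow> real" where
  "bias_source S = (\<lambda>(x, y). bias_kernel S x y / (2 * mu x * mu y))"

lemma exists_solves_poisson_bias_source: "\<exists>J. pair.solves_poisson (bias_source S) J"
  by (rule pair.solves_poisson_exists[OF pair_absorbing])
    (auto simp: bias_source_def bias_kernel_def intro!: divide_nonneg_nonneg sum_nonneg
      mult_nonneg_nonneg mu_nonneg P_nonneg)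

lemma sum_P_indicator: "X \<subseteq> V \<Longrightarrow> (\<Sum>m\<in>V. P a m * of_bool (m \<in> X)) = nbr_share X a"
  unfolding nbr_share_def by (simp add: sum_mult_of_bool_eq[OF finite_V] Int_absorb1)

lemma sum_P_indicator_compl:
  assumes "X \<subseteq> V" "a \<in> V"
  shows "(\<Sum>m\<in>V. P a m * of_bool (m \<notin> X)) = 1 - nbr_share X a"
proof -
  have "(\<Sum>m\<in>V. P a m * of_bool (m \<notin> X)) = (\<Sum>m\<in>V. P a m - P a m * of_bool (m \<in> X))"
    by (intro sum.cong) auto
  also have "\<dots> = (\<Sum>m\<in>V. P a m) - (\<Sum>m\<in>V. P a m * of_bool (m \<in> X))"
    by (rule sum_subtractf)
  finally show ?thesis using sum_P_indicator[OF assms(1)] P_row_sum[OF assms(2)] by simp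
qed

definition cut_ind :: "'v \<Rightarrow> 'v \<Rightarrow> 'v set \<Rightarrow> real" where
  "cut_ind a b X = of_bool (a \<in> X) * of_bool (b \<notin> X)"

lemma expect_next_cut_ind:
  assumes "X \<subseteq> V" "a \<in> V" "b \<in> V" "a \<noteq> b"
  shows "expect_next S 0 X (cut_ind a b) - cut_ind a b X
    = (1 / n) * ((\<Sum>m\<in>V. P a m * cut_ind m b X) + (\<Sum>m\<in>V. P b m * cut_ind a m X) - 2 * cut_ind a b X)"
proof -
  define T where "T u = nbr_share X u * cut_ind a b (insert u X) + (1 - nbr_share X u) * cut_ind a b (X - {u})"
    for u
  have "(\<Sum>u\<in>V. T u) = n * cut_ind a b X + (T a - cut_ind a b X) + (T b - cut_ind a b X)"
    using finite_V assms(2-4) by (rule sum_eq_const_except_two) (auto simp: T_def cut_ind_def)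
  moreover have "T a = (\<Sum>m\<in>V. P a m * cut_ind m b X)"
    using sum_P_indicator[OF assms(1), of a] assms(4)
    by (simp add: T_def cut_ind_def sum_distrib_right[symmetric] mult.assoc)
  moreover have "T b = (\<Sum>m\<in>V. P b m * cut_ind a m X)"
    using sum_P_indicator_compl[OF assms(1,3)] assms(4)
    by (simp add: T_def cut_ind_def sum_distrib_left[symmetric] mult.left_commute)
  ultimately show ?thesis
    unfolding expect_next_eq[OF assms(1) order.refl] adopt_prob_neutral T_def[symmetric]
    using n_pos by (simp add: field_simps)
qed

lemma sum_cut_ind_bias_kernel:
  assumes "X \<subseteq> V" "S \<subseteq> V"
  shows "(\<Sum>x\<in>V. \<Sum>y\<in>V. cut_ind x y X * bias_kernel S x y)
    = (\<Sum>u\<in>S. mu u * (nbr_share X u * (1 - nbr_share X u)))"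
proof -
  have "(\<Sum>x\<in>V. \<Sum>y\<in>V. cut_ind x y X * bias_kernel S x y)
      = (\<Sum>x\<in>V. \<Sum>y\<in>V. \<Sum>u\<in>S. mu u * (P u x * of_bool (x \<in> X)) * (P u y * of_bool (y \<notin> X)))"
    unfolding bias_kernel_def cut_ind_def sum_distrib_left by (simp add: mult_ac)
  also have "\<dots> = (\<Sum>x\<in>V. \<Sum>u\<in>S. \<Sum>y\<in>V. mu u * (P u x * of_bool (x \<in> X)) * (P u y * of_bool (y \<notin> X)))"
    by (rule sum.cong[OF refl], rule sum.swap)
  also have "\<dots> = (\<Sum>u\<in>S. \<Sum>x\<in>V. \<Sum>y\<in>V. mu u * (P u x * of_bool (x \<in> X)) * (P u y * of_bool (y \<notin> X)))"
    by (rule sum.swap)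
  also have "\<dots> = (\<Sum>u\<in>S. mu u * ((\<Sum>x\<in>V. P u x * of_bool (x \<in> X)) * (\<Sum>y\<in>V. P u y * of_bool (y \<notin> X))))"
  proof (intro sum.cong refl)
    fix u
    show "(\<Sum>x\<in>V. \<Sum>y\<in>V. mu u * (P u x * of_bool (x \<in> X)) * (P u y * of_bool (y \<notin> X)))
      = mu u * ((\<Sum>x\<in>V. P u x * of_bool (x \<in> X)) * (\<Sum>y\<in>V. P u y * of_bool (y \<notin> X)))"
      by (subst sum_product) (simp add: sum_distrib_left mult.assoc)
  qed
  also have "\<dots> = (\<Sum>u\<in>S. mu u * (nbr_share X u * (1 - nbr_share X u)))"
    using assms by (intro sum.cong refl) (auto simp: sum_P_indicator sum_P_indicator_compl)
  finally show ?thesis .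
qed

lemma sum_psi_bias_kernel_eq_hfun:
  assumes "S \<subseteq> V"
  shows "(\<Sum>x\<in>V. \<Sum>y\<in>V. psi V E w x y * bias_kernel S x y) = (\<Sum>j\<in>S. hfun V E w j)"
proof -
  have "(\<Sum>x\<in>V. \<Sum>y\<in>V. psi V E w x y * bias_kernel S x y)
      = (\<Sum>x\<in>V. \<Sum>y\<in>V. \<Sum>j\<in>S. mu j * P j x * P j y * psi V E w x y)"
    unfolding bias_kernel_def by (simp add: sum_distrib_left mult_ac)
  also have "\<dots> = (\<Sum>x\<in>V. \<Sum>j\<in>S. \<Sum>y\<in>V. mu j * P j x * P j y * psi V E w x y)"
    by (rule sum.cong[OF refl], rule sum.swap)
  also have "\<dots> = (\<Sum>j\<in>S. \<Sum>x\<in>V. \<Sum>y\<in>V. mu j * P j x * P j y * psi V E w x y)"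
    by (rule sum.swap)
  also have "\<dots> = (\<Sum>j\<in>S. hfun V E w j)"
    unfolding hfun_def
  proof (intro sum.cong refl)
    fix j x y assume "j \<in> S" "x \<in> V"
    then have "piv V E w x * P x j = mu j * P j x"
      using assms piv_eq_mu mu_detailed_balance by auto
    then show "mu j * P j x * P j y * psi V E w x y = piv V E w x * P x j * P j y * psi V E w x y"
      by simp
  qed
  finally show ?thesis .
qed

end

locale first_order_expansion = nontrivial_voter_graph V E w
  for V :: "'v set" and E :: "('v \<times> 'v) set" and w :: "'v \<Rightarrow> 'v \<Rightarrow> real" +
  fixes S :: "'v set" and J :: "'v \<times> 'v \<Rightarrow> real"
  assumes S_subset: "S \<subseteq> V"
    and J_solves: "pair.solves_poisson (bias_source S) J"
begin

lemma J_diag: "J (a, a) = 0"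
  using J_solves unfolding pair.solves_poisson_def by simp

lemma J_equation:
  assumes "x \<in> V" "y \<in> V" "x \<noteq> y"
  shows "(\<Sum>l\<in>V. P x l * J (l, y)) + (\<Sum>l\<in>V. P y l * J (x, l)) - 2 * J (x, y)
    = - (bias_kernel S x y / (mu x * mu y))"
proof -
  have "J (x, y) = ((\<Sum>l\<in>V. P x l * J (l, y)) + (\<Sum>l\<in>V. P y l * J (x, l))) / 2
      + bias_kernel S x y / (2 * mu x * mu y)"
    using J_solves assms unfolding pair.solves_poisson_def by (simp add: pair_sum bias_source_def)
  then show ?thesis by (simp add: field_simps)
qed

definition K :: "'v \<Rightarrow> 'v \<Rightarrow> real" where "K a b = mu a * mu b * J (a, b)"

lemma K_diag: "K a a = 0"
  unfolding K_def J_diag by simp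

text \<open>Detailed balance turns the pair equation for \<open>J\<close> into the adjoint equation for \<open>K\<close>.\<close>

lemma K_adjoint:
  assumes "\<And>x. x \<in> V \<Longrightarrow> F x x = 0"
  shows "(\<Sum>a\<in>V. \<Sum>b\<in>V. K a b * ((\<Sum>m\<in>V. P a m * F m b) + (\<Sum>m\<in>V. P b m * F a m) - 2 * F a b))
    = - (\<Sum>x\<in>V. \<Sum>y\<in>V. F x y * bias_kernel S x y)"
proof -
  have "F x y * ((\<Sum>a\<in>V. K a y * P a x) + (\<Sum>b\<in>V. K x b * P b y) - 2 * K x y)
      = - (F x y * bias_kernel S x y)" if "x \<in> V" "y \<in> V" for x y
  proof (cases "x = y")
    case False
    have "(\<Sum>a\<in>V. K a y * P a x) = mu x * mu y * (\<Sum>l\<in>V. P x l * J (l, y))"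
      unfolding K_def sum_distrib_left
      by (intro sum.cong refl) (simp add: mu_detailed_balance[OF _ that(1)] mult_ac)
    moreover have "(\<Sum>b\<in>V. K x b * P b y) = mu x * mu y * (\<Sum>l\<in>V. P y l * J (x, l))"
      unfolding K_def sum_distrib_left
      by (intro sum.cong refl) (simp add: mu_detailed_balance[OF _ that(2)] mult_ac)
    ultimately have "(\<Sum>a\<in>V. K a y * P a x) + (\<Sum>b\<in>V. K x b * P b y) - 2 * K x y
        = mu x * mu y * ((\<Sum>l\<in>V. P x l * J (l, y)) + (\<Sum>l\<in>V. P y l * J (x, l)) - 2 * J (x, y))"
      by (simp add: K_def algebra_simps)
    also have "\<dots> = - bias_kernel S x y"
      unfolding J_equation[OF that False] using mu_pos[OF that(1)] mu_pos[OF that(2)] by simp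
    finally show ?thesis by simp
  qed (simp add: assms that)
  then show ?thesis
    unfolding pair_operator_adjoint
    by (simp add: sum_negf[symmetric] cong: sum.cong)
qed

definition Phi :: "'v set \<Rightarrow> real" where
  "Phi X = (\<Sum>a\<in>V. \<Sum>b\<in>V. K a b * cut_ind a b X)"

lemma Phi_neutral_drift:
  assumes "X \<subseteq> V"
  shows "expect_next S 0 X Phi
    = Phi X - (1 / n) * (\<Sum>u\<in>S. mu u * (nbr_share X u * (1 - nbr_share X u)))"
proof -
  have "expect_next S 0 X Phi - Phi X
      = (\<Sum>a\<in>V. \<Sum>b\<in>V. K a b * (expect_next S 0 X (cut_ind a b) - cut_ind a b X))"
    unfolding Phi_def[abs_def] expect_next_sum expect_next_scale
    by (simp add: right_diff_distrib sum_subtractf)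
  also have "\<dots> = (1 / n) * (\<Sum>a\<in>V. \<Sum>b\<in>V. K a b * ((\<Sum>m\<in>V. P a m * cut_ind m b X)
      + (\<Sum>m\<in>V. P b m * cut_ind a m X) - 2 * cut_ind a b X))"
    unfolding sum_distrib_left
  proof (intro sum.cong refl)
    fix a b assume "a \<in> V" "b \<in> V"
    then show "K a b * (expect_next S 0 X (cut_ind a b) - cut_ind a b X)
      = 1 / n * (K a b * ((\<Sum>m\<in>V. P a m * cut_ind m b X) + (\<Sum>m\<in>V. P b m * cut_ind a m X)
        - 2 * cut_ind a b X))"
      by (cases "a = b") (simp_all add: K_diag expect_next_cut_ind[OF assms])
  qed
  also have "\<dots> = - (1 / n) * (\<Sum>u\<in>S. mu u * (nbr_share X u * (1 - nbr_share X u)))"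
    using K_adjoint[where F = "\<lambda>x y. cut_ind x y X"] sum_cut_ind_bias_kernel[OF assms S_subset]
    by (simp add: cut_ind_def)
  finally show ?thesis by simp
qed

definition Phi_max :: real where "Phi_max = (\<Sum>a\<in>V. \<Sum>b\<in>V. \<bar>K a b\<bar>)"

lemma abs_Phi_le: "\<bar>Phi X\<bar> \<le> Phi_max"
  unfolding Phi_def Phi_max_def
  by (rule order.trans[OF sum_abs], intro sum_mono order.trans[OF sum_abs])
    (simp add: abs_mult cut_ind_def mult_le_cancel_left1)

lemma Phi_max_nonneg: "0 \<le> Phi_max"
  unfolding Phi_max_def by (intro sum_nonneg) auto

lemma Phi_empty: "Phi {} = 0" and Phi_V: "Phi V = 0"
  unfolding Phi_def cut_ind_def by simp_all

definition remainder :: "real \<Rightarrow> 'v set \<Rightarrow> real" where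
  "remainder \<delta> X = fp_from V E w S \<delta> X - sum mu X - \<delta> * Phi X"

definition remainder_source :: "real \<Rightarrow> 'v set \<Rightarrow> real" where
  "remainder_source \<delta> X =
     (expect_next S \<delta> X (sum mu) - sum mu X) + \<delta> * (expect_next S \<delta> X Phi - Phi X)"

lemma remainder_poisson:
  assumes "X \<noteq> V" "0 \<le> \<delta>"
  shows "remainder \<delta> X = expect_next S \<delta> X (remainder \<delta>) + remainder_source \<delta> X"
  unfolding remainder_def[abs_def] remainder_source_def expect_next_diff expect_next_scale
    fp_from_step[OF assms(2,1), symmetric]
  by (simp add: algebra_simps)

lemma remainder_source_eq:
  assumes "X \<subseteq> V" "0 \<le> \<delta>"
  shows "remainder_source \<delta> X = (1 / n) * (\<Sum>u\<in>V.
      mu u * (adopt_prob S \<delta> X u - nbr_share X u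
        - \<delta> * of_bool (u \<in> S) * (nbr_share X u * (1 - nbr_share X u)))
      + \<delta> * ((adopt_prob S \<delta> X u - nbr_share X u) * (Phi (insert u X) - Phi (X - {u}))))"
proof -
  have biased: "expect_next S \<delta> X Phi - expect_next S 0 X Phi
      = (1 / n) * (\<Sum>u\<in>V. (adopt_prob S \<delta> X u - nbr_share X u) * (Phi (insert u X) - Phi (X - {u})))"
  proof -
    have "expect_next S \<delta> X Phi - expect_next S 0 X Phi = (1 / n) *
      (\<Sum>u\<in>V. (adopt_prob S \<delta> X u * Phi (insert u X) + (1 - adopt_prob S \<delta> X u) * Phi (X - {u}))
        - (nbr_share X u * Phi (insert u X) + (1 - nbr_share X u) * Phi (X - {u})))"
      unfolding expect_next_eq[OF assms] expect_next_eq[OF assms(1) order.refl] adopt_prob_neutral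
      by (simp add: right_diff_distrib sum_subtractf)
    then show ?thesis by (simp add: algebra_simps)
  qed
  have "(\<Sum>u\<in>S. mu u * (nbr_share X u * (1 - nbr_share X u)))
      = (\<Sum>u\<in>V. mu u * (nbr_share X u * (1 - nbr_share X u)) * of_bool (u \<in> S))"
    using S_subset by (simp add: sum_mult_of_bool_eq[OF finite_V] Int_absorb1)
  then have neutral: "expect_next S 0 X Phi - Phi X
      = - (1 / n) * (\<Sum>u\<in>V. mu u * of_bool (u \<in> S) * (nbr_share X u * (1 - nbr_share X u)))"
    using Phi_neutral_drift[OF assms(1)] by (simp add: mult_ac)
  have Phi_step: "expect_next S \<delta> X Phi - Phi X
      = (1 / n) * (\<Sum>u\<in>V. (adopt_prob S \<delta> X u - nbr_share X u) * (Phi (insert u X) - Phi (X - {u})))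
      - (1 / n) * (\<Sum>u\<in>V. mu u * of_bool (u \<in> S) * (nbr_share X u * (1 - nbr_share X u)))"
    using biased neutral by linarith
  have "remainder_source \<delta> X = (1 / n) * (\<Sum>u\<in>V. mu u * (adopt_prob S \<delta> X u - nbr_share X u))
      + \<delta> * ((1 / n) * (\<Sum>u\<in>V. (adopt_prob S \<delta> X u - nbr_share X u) * (Phi (insert u X) - Phi (X - {u})))
      - (1 / n) * (\<Sum>u\<in>V. mu u * of_bool (u \<in> S) * (nbr_share X u * (1 - nbr_share X u))))"
    unfolding remainder_source_def expect_next_sum_mu[OF assms] Phi_step by simp
  then show ?thesis
    by (simp add: sum.distrib sum_subtractf sum_distrib_left right_diff_distrib distrib_left mult_ac)
qed

lemma abs_remainder_source_le:
  assumes "X \<subseteq> V" "0 \<le> \<delta>" "\<delta> \<le> 1"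
  shows "\<bar>remainder_source \<delta> X\<bar> \<le> \<delta>\<^sup>2 * (1 + 2 * Phi_max)"
proof -
  have term_le: "\<bar>mu u * (adopt_prob S \<delta> X u - nbr_share X u
        - \<delta> * of_bool (u \<in> S) * (nbr_share X u * (1 - nbr_share X u)))
      + \<delta> * ((adopt_prob S \<delta> X u - nbr_share X u) * (Phi (insert u X) - Phi (X - {u})))\<bar>
      \<le> \<delta>\<^sup>2 * (1 + 2 * Phi_max)" for u
  proof -
    have "\<bar>mu u * (adopt_prob S \<delta> X u - nbr_share X u
        - \<delta> * of_bool (u \<in> S) * (nbr_share X u * (1 - nbr_share X u)))\<bar> \<le> 1 * \<delta>\<^sup>2"
      unfolding abs_mult using mu_nonneg[of u] mu_le_1[of u] adopt_prob_expansion(1)[OF assms(1,2)]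
      by (intro mult_mono) auto
    moreover have "\<bar>\<delta> * ((adopt_prob S \<delta> X u - nbr_share X u) * (Phi (insert u X) - Phi (X - {u})))\<bar>
        \<le> \<delta> * (\<delta> * (2 * Phi_max))"
      unfolding abs_mult using assms(2) adopt_prob_expansion(2)[OF assms(1,2)]
        abs_Phi_le[of "insert u X"] abs_Phi_le[of "X - {u}"]
      by (intro mult_left_mono mult_mono) auto
    ultimately show ?thesis
      by (simp add: power2_eq_square algebra_simps)
  qed
  have "\<bar>remainder_source \<delta> X\<bar> \<le> (1 / n) * (\<Sum>u\<in>V. \<delta>\<^sup>2 * (1 + 2 * Phi_max))"
    unfolding remainder_source_eq[OF assms(1,2)] abs_mult abs_divide abs_one abs_of_nat using n_pos
    by (intro mult_left_mono order.trans[OF sum_abs] sum_mono term_le) auto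
  also have "\<dots> = \<delta>\<^sup>2 * (1 + 2 * Phi_max)"
    using n_pos by simp
  finally show ?thesis .
qed

lemma abs_remainder_le:
  assumes "X \<subseteq> V" "0 \<le> \<delta>" "\<delta> \<le> 1"
  shows "\<bar>remainder \<delta> X\<bar> \<le> n * (\<delta>\<^sup>2 * (1 + 2 * Phi_max)) / eta_config ^ card V"
proof (rule config_max_principle[OF assms(2,3) _ _ _ _ _ assms(1)])
  show "remainder \<delta> {} = 0" "remainder \<delta> V = 0"
    unfolding remainder_def using fp_from_empty fp_from_V assms(2) mu_sum Phi_empty Phi_V by simp_all
  show "remainder \<delta> Y = expect_next S \<delta> Y (remainder \<delta>) + remainder_source \<delta> Y"
    if "Y \<subseteq> V" "Y \<noteq> {}" "Y \<noteq> V" for Y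
    using remainder_poisson[OF that(3) assms(2)] .
  show "\<bar>remainder_source \<delta> Y\<bar> \<le> \<delta>\<^sup>2 * (1 + 2 * Phi_max)" if "Y \<subseteq> V" for Y
    using abs_remainder_source_le[OF that assms(2,3)] .
qed (use Phi_max_nonneg in simp)

lemma fp_has_derivative_Phi:
  "((\<lambda>\<delta>. fp V E w S \<delta>) has_real_derivative (1 / n) * (\<Sum>u\<in>V. Phi {u})) (at 0 within {0..})"
proof (rule has_real_derivative_at_0_if_quadratic_remainder)
  fix \<delta> :: real assume \<delta>: "0 \<le> \<delta>" "\<delta> \<le> 1"
  define C where "C = n * (1 + 2 * Phi_max) / eta_config ^ card V"
  have "fp V E w S \<delta> - fp V E w S 0 - \<delta> * ((1 / n) * (\<Sum>u\<in>V. Phi {u}))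
      = (1 / n) * (\<Sum>u\<in>V. remainder \<delta> {u})"
  proof -
    have "(\<Sum>u\<in>V. fp_from V E w S 0 {u}) = (\<Sum>u\<in>V. sum mu {u})"
      by (intro sum.cong refl) (simp add: fp_from_neutral)
    then show ?thesis
      unfolding fp_def remainder_def sum_subtractf by (simp add: sum_distrib_left right_diff_distrib)
  qed
  moreover have "\<bar>\<Sum>u\<in>V. remainder \<delta> {u}\<bar> \<le> (\<Sum>u\<in>V. C * \<delta>\<^sup>2)"
  proof (rule order.trans[OF sum_abs sum_mono])
    fix u assume "u \<in> V"
    then show "\<bar>remainder \<delta> {u}\<bar> \<le> C * \<delta>\<^sup>2"
      using abs_remainder_le[of "{u}", OF _ \<delta>] by (simp add: C_def mult_ac)
  qed
  ultimately show "\<bar>fp V E w S \<delta> - fp V E w S 0 - \<delta> * ((1 / n) * (\<Sum>u\<in>V. Phi {u}))\<bar> \<le> C * \<delta>\<^sup>2"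
    using n_pos by (simp add: abs_mult pos_divide_le_eq mult_ac)
qed

lemma sum_Phi_singletons: "(\<Sum>u\<in>V. Phi {u}) = (\<Sum>a\<in>V. \<Sum>b\<in>V. K a b)"
proof (intro sum.cong refl)
  fix u assume "u \<in> V"
  have "Phi {u} = (\<Sum>a\<in>V. if a = u then (\<Sum>b\<in>V. K u b) else 0)"
    unfolding Phi_def
  proof (intro sum.cong refl)
    fix a
    show "(\<Sum>b\<in>V. K a b * cut_ind a b {u}) = (if a = u then (\<Sum>b\<in>V. K u b) else 0)"
      by (cases "a = u") (auto simp: cut_ind_def K_diag intro!: sum.cong)
  qed
  then show "Phi {u} = (\<Sum>b\<in>V. K u b)"
    using \<open>u \<in> V\<close> finite_V by simp
qed

lemma sum_K_eq_sum_psi_bias_kernel: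
  "(\<Sum>a\<in>V. \<Sum>b\<in>V. K a b) = (\<Sum>x\<in>V. \<Sum>y\<in>V. psi V E w x y * bias_kernel S x y)"
proof -
  have "(\<Sum>a\<in>V. \<Sum>b\<in>V. K a b * ((\<Sum>m\<in>V. P a m * psi V E w m b) + (\<Sum>m\<in>V. P b m * psi V E w a m)
      - 2 * psi V E w a b)) = - (\<Sum>a\<in>V. \<Sum>b\<in>V. K a b)"
    unfolding sum_negf[symmetric]
  proof (intro sum.cong refl)
    fix a b assume "a \<in> V" "b \<in> V"
    then show "K a b * ((\<Sum>m\<in>V. P a m * psi V E w m b) + (\<Sum>m\<in>V. P b m * psi V E w a m)
        - 2 * psi V E w a b) = - K a b"
    proof (cases "a = b")
      case False
      then have "(\<Sum>m\<in>V. P a m * psi V E w m b) + (\<Sum>m\<in>V. P b m * psi V E w a m)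
          - 2 * psi V E w a b = -1"
        using psi_equation[OF \<open>a \<in> V\<close> \<open>b \<in> V\<close>] by linarith
      then show ?thesis by simp
    qed (simp add: K_diag)
  qed
  then show ?thesis
    using K_adjoint[where F = "psi V E w"] psi_diag by simp
qed

lemma fp_has_derivative_hfun:
  "((\<lambda>\<delta>. fp V E w S \<delta>) has_real_derivative (1 / n) * (\<Sum>j\<in>S. hfun V E w j)) (at 0 within {0..})"
  using fp_has_derivative_Phi
  unfolding sum_Phi_singletons sum_K_eq_sum_psi_bias_kernel sum_psi_bias_kernel_eq_hfun[OF S_subset] .

end

context voter_graph
begin

lemma fp_has_derivative:
  assumes "S \<subseteq> V"
  shows "((\<lambda>\<delta>. fp V E w S \<delta>) has_real_derivative (1 / n) * (\<Sum>j\<in>S. hfun V E w j)) (at 0 within {0..})"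
proof (cases "\<exists>a\<in>V. \<exists>b\<in>V. a \<noteq> b")
  case True
  interpret nontrivial_voter_graph V E w
    using True by unfold_locales
  obtain J where "pair.solves_poisson (bias_source S) J"
    using exists_solves_poisson_bias_source by blast
  then interpret first_order_expansion V E w S J
    using assms by unfold_locales
  show ?thesis by (rule fp_has_derivative_hfun)
next
  case False
  then obtain a where V: "V = {a}"
    using V_nonempty by blast
  have "hfun V E w a = 0"
    unfolding hfun_def V using psi_diag[of a] V by simp
  moreover have "S = {} \<or> S = {a}"
    using assms unfolding V by (rule subset_singletonD)
  ultimately have "sum (hfun V E w) S = 0"
    by auto
  moreover have "fp V E w S \<delta> = 1" if "0 \<le> \<delta>" for \<delta>
    unfolding fp_def using fp_from_V[OF that, of S] V by simp
  ultimately show ?thesis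
    by (intro has_real_derivative_at_0_if_quadratic_remainder[where C = 0]) simp
qed

lemma fp_deriv0_eq:
  "S \<subseteq> V \<Longrightarrow> fp_deriv0 V E w S = (1 / n) * (\<Sum>j\<in>S. hfun V E w j)"
  unfolding fp_deriv0_def using fp_has_derivative by (rule The_has_real_derivative_at_0)

lemma fp_deriv0_le_if_dominating:
  assumes "S \<subseteq> V" "T \<subseteq> V" "card S = card T"
    and "\<forall>j\<in>T. \<forall>l\<in>V - T. hfun V E w l \<le> hfun V E w j"
  shows "fp_deriv0 V E w S \<le> fp_deriv0 V E w T"
proof -
  have "sum (hfun V E w) S \<le> sum (hfun V E w) T"
    by (rule sum_le_sum_if_dominating[OF finite_V assms])
  then show ?thesis
    unfolding fp_deriv0_eq[OF assms(1)] fp_deriv0_eq[OF assms(2)] using n_pos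
    by (intro mult_left_mono) auto
qed

end

theorem mainTheorem11:
  fixes V :: "'v set" and E :: "('v \<times> 'v) set" and w :: "'v \<Rightarrow> 'v \<Rightarrow> real"
  assumes "wgraph V E w"
    and "strongly_connected V E"
    and "symmetric_weights E w"
  shows "(\<forall>S\<subseteq>V. ((\<lambda>\<delta>. fp V E w S \<delta>) has_real_derivative
              (1 / real (card V)) * (\<Sum>j\<in>S. hfun V E w j)) (at 0 within {0..}))
    \<and> (\<forall>k T. T \<subseteq> V \<and> card T = k \<and> (\<forall>j\<in>T. \<forall>l\<in>V - T. hfun V E w l \<le> hfun V E w j)
          \<longrightarrow> (\<forall>S\<subseteq>V. card S = k \<longrightarrow> fp_deriv0 V E w S \<le> fp_deriv0 V E w T))"
proof -
  interpret voter_graph V E w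
    using assms by unfold_locales
  show ?thesis
  proof (intro conjI allI impI)
    fix S assume "S \<subseteq> V"
    then show "((\<lambda>\<delta>. fp V E w S \<delta>) has_real_derivative (1 / real (card V)) * (\<Sum>j\<in>S. hfun V E w j))
      (at 0 within {0..})"
      by (rule fp_has_derivative)
  next
    fix k T S
    assume "T \<subseteq> V \<and> card T = k \<and> (\<forall>j\<in>T. \<forall>l\<in>V - T. hfun V E w l \<le> hfun V E w j)"
      and "S \<subseteq> V" "card S = k"
    then show "fp_deriv0 V E w S \<le> fp_deriv0 V E w T"
      by (intro fp_deriv0_le_if_dominating) auto
  qed
qed

end
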